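(* The quotient $\mathcal A/\mathcal J$ is an infinite-dimensional, purely infinite Banach $*$-algebra; that is, it is not a division algebra, and for every non-zero $a\in\mathcal A/\mathcal J$ there exist $b,c\in\mathcal A/\mathcal J$ with $bac=1_{\mathcal A/\mathcal J}$.
   Context: Let $\mathrm{Cu}_2$ be the involutive monoid with identity $e$ and zero element $\lozenge$ (so $\lozenge t=\lozenge=t\lozenge$ for all $t$), generated by $s_1,s_2,s_1^*,s_2^*$ subject to $s_1^*s_1=e=s_2^*s_2$ and $s_1^*s_2=\lozenge=s_2^*s_1$, with involution $t\mapsto t^*$ satisfying $(t^* )^*=t$, $(tu)^*=u^*t^*$. Let $\mathcal A=\ell^1(\mathrm{Cu}_2\setminus\{\lozenge\})$ with product $\#$ determined by bilinearity and continuity from $\delta_s\#\delta_t=\delta_{st}$ if $st\neq\lozenge$ and $\delta_s\#\delta_t=0$ if $st=\lozenge$; this is a unital Banach $*$-algebra with unit $\delta_e$ and isometric involution $f^*(s)=\overline{f(s^* )}$. Let $f_0=\delta_e-\delta_{s_1s_1^*}-\delta_{s_2s_2^*}$ and let $\mathcal J$ be the closed two-sided ideal of $\mathcal A$ generated by $f_0$ (a $*$-ideal); $\mathcal A/\mathcal J$ carries the quotient norm and involution. *)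

theory Defs
  imports "HOL-Analysis.Analysis"
begin

text \<open>Every non-zero element of Cu_2 has a unique normal form s_mu s_nu^* with mu, nu
  words over the alphabet {1,2}; we encode the letter 1 as False and 2 as True.
  The pair (mu, nu) stands for s_mu s_nu^*, where s_(i1...ik) = s_i1 ... s_ik.
  The zero element is represented by None in the partial multiplication.\<close>

type_synonym cu2 = "bool list \<times> bool list"

definition cu_e :: cu2 where "cu_e = ([], [])"

definition cu_s1 :: cu2 where "cu_s1 = ([False], [])"
definition cu_s2 :: cu2 where "cu_s2 = ([True], [])"

definition cu_star :: "cu2 \<Rightarrow> cu2" where "cu_star x = (snd x, fst x)"

text \<open>Multiplication; None is the zero element.
  (s_mu s_nu^*)(s_al s_be^*): if al = nu @ g it is s_(mu @ g) s_be^*;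
  if nu = al @ g it is s_mu s_(be @ g)^*; otherwise it is zero.\<close>
definition cu_mult :: "cu2 \<Rightarrow> cu2 \<Rightarrow> cu2 option" where
  "cu_mult x y =
     (let (mu, nu) = x; (al, be) = y in
      if take (length nu) al = nu then Some (mu @ drop (length nu) al, be)
      else if take (length al) nu = al then Some (mu, be @ drop (length al) nu)
      else None)"

definition l1A :: "(cu2 \<Rightarrow> complex) set" where
  "l1A = {f. (\<lambda>s. norm (f s)) summable_on UNIV}"

definition l1norm :: "(cu2 \<Rightarrow> complex) \<Rightarrow> real" where
  "l1norm f = (\<Sum>\<^sub>\<infinity>s. norm (f s))"

text \<open>The product #, obtained from delta_s # delta_t = delta_(st) (or 0 if st is zero)
  by bilinearity and continuity.\<close>
definition l1conv :: "(cu2 \<Rightarrow> complex) \<Rightarrow> (cu2 \<Rightarrow> complex) \<Rightarrow> (cu2 \<Rightarrow> complex)" (infixl "#\<^sub>\<ell>" 70) where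
  "l1conv f g = (\<lambda>u. \<Sum>\<^sub>\<infinity>p \<in> {p. cu_mult (fst p) (snd p) = Some u}. f (fst p) * g (snd p))"

definition l1delta :: "cu2 \<Rightarrow> (cu2 \<Rightarrow> complex)" where
  "l1delta s = (\<lambda>t. if t = s then 1 else 0)"

definition l1inv :: "(cu2 \<Rightarrow> complex) \<Rightarrow> (cu2 \<Rightarrow> complex)" where
  "l1inv f = (\<lambda>s. cnj (f (cu_star s)))"

definition l1unit :: "cu2 \<Rightarrow> complex" where
  "l1unit = l1delta cu_e"

definition f0 :: "cu2 \<Rightarrow> complex" where
  "f0 = (\<lambda>s. l1unit s - l1delta ([False], [False]) s - l1delta ([True], [True]) s)"

definition l1_ideal :: "(cu2 \<Rightarrow> complex) set \<Rightarrow> bool" where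
  "l1_ideal S \<longleftrightarrow> S \<subseteq> l1A \<and> (\<lambda>s. 0) \<in> S \<and>
     (\<forall>f\<in>S. \<forall>g\<in>S. (\<lambda>s. f s + g s) \<in> S) \<and>
     (\<forall>c::complex. \<forall>f\<in>S. (\<lambda>s. c * f s) \<in> S) \<and>
     (\<forall>a\<in>l1A. \<forall>f\<in>S. a #\<^sub>\<ell> f \<in> S \<and> f #\<^sub>\<ell> a \<in> S)"

definition l1_closed :: "(cu2 \<Rightarrow> complex) set \<Rightarrow> bool" where
  "l1_closed S \<longleftrightarrow> (\<forall>X f. (\<forall>n. X n \<in> S) \<and> f \<in> l1A \<and>
       (\<lambda>n. l1norm (\<lambda>s. X n s - f s)) \<longlonglongrightarrow> 0 \<longrightarrow> f \<in> S)"

definition J :: "(cu2 \<Rightarrow> complex) set" where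
  "J = \<Inter>{S. l1_ideal S \<and> l1_closed S \<and> f0 \<in> S}"

text \<open>The class of a in A/J is zero iff a is in J; [a] = [b] iff a - b in J.\<close>

definition qdiff :: "(cu2 \<Rightarrow> complex) \<Rightarrow> (cu2 \<Rightarrow> complex) \<Rightarrow> (cu2 \<Rightarrow> complex)" where
  "qdiff f g = (\<lambda>s. f s - g s)"

definition quot_finite_dim :: bool where
  "quot_finite_dim \<longleftrightarrow> (\<exists>F. finite F \<and> F \<subseteq> l1A \<and>
      (\<forall>f\<in>l1A. \<exists>c :: (cu2 \<Rightarrow> complex) \<Rightarrow> complex.
          (\<lambda>s. f s - (\<Sum>g\<in>F. c g * g s)) \<in> J))"

definition quot_division_algebra :: bool where
  "quot_division_algebra \<longleftrightarrow> l1unit \<notin> J \<and>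
     (\<forall>a\<in>l1A. a \<notin> J \<longrightarrow> (\<exists>b\<in>l1A. qdiff (a #\<^sub>\<ell> b) l1unit \<in> J \<and> qdiff (b #\<^sub>\<ell> a) l1unit \<in> J))"

definition quot_purely_infinite :: bool where
  "quot_purely_infinite \<longleftrightarrow>
     (\<forall>a\<in>l1A. a \<notin> J \<longrightarrow> (\<exists>b\<in>l1A. \<exists>c\<in>l1A. qdiff ((b #\<^sub>\<ell> a) #\<^sub>\<ell> c) l1unit \<in> J))"

end

theory Submission
  imports Defs "HOL-Library.Function_Algebras"
begin

text \<open>Write the non-zero elements of Cu_2 as s_mu s_nu^*. Conjugating f_0 shows that modulo J
  every s_mu s_nu^* is the sum of the s_(mu g) s_(nu g)^* over all words g of a fixed length.

  Pure infiniteness: sandwiching a between s_(mu w)^* and s_(nu w), for a long marker word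
  w = 0...01, sends every short term of a to zero or to the unit, and the unit collects exactly the
  terms at the ancestors of (mu w, nu w). If in every such sandwich the unit coefficient were
  dominated by the remaining mass, then padding the truncations of a down to a common level would
  exhibit a as an l1-limit of elements of J, so a would lie in J. Otherwise some sandwich is
  a non-zero multiple of 1 + z with norm z < 1, invertible by a Neumann series.

  The functionals f \<mapsto> sum of f(s) tau(x s y), where tau gives s_mu s_mu^* the weight
  2^(-|mu|), vanish on J. Evaluated on the powers of s_1 they show that these powers are linearly
  independent modulo J, and that s_1 has no right inverse modulo J, because s_2^* s_1 = 0.\<close>

section \<open>The monoid Cu_2\<close>

lemma cu_mult_Some_iff:
  "cu_mult (\<mu>, \<nu>) (\<alpha>, \<beta>) = Some r \<longleftrightarrow>
     (\<exists>g. \<alpha> = \<nu> @ g \<and> r = (\<mu> @ g, \<beta>)) \<or> (\<exists>g. \<nu> = \<alpha> @ g \<and> r = (\<mu>, \<beta> @ g))"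
  unfolding cu_mult_def Let_def
  by (auto simp: take_all) (metis append_take_drop_id)+

lemma cu_mult_None_iff:
  "cu_mult (\<mu>, \<nu>) (\<alpha>, \<beta>) = None \<longleftrightarrow> (\<nexists>g. \<alpha> = \<nu> @ g) \<and> (\<nexists>g. \<nu> = \<alpha> @ g)"
  unfolding cu_mult_def Let_def
  by (auto simp: take_all) (metis append_eq_conv_conj)+

lemma cu_mult_unit_right: "cu_mult s cu_e = Some s"
  by (cases s) (simp add: cu_mult_def cu_e_def)

fun cu_mult0 :: "cu2 option \<Rightarrow> cu2 option \<Rightarrow> cu2 option" where
  "cu_mult0 (Some s) (Some t) = cu_mult s t"
| "cu_mult0 _ _ = None"

text \<open>Associativity of Cu_2 comes from its faithful action on words: s_mu s_nu^* is the
  partial map nu g \<mapsto> mu g, and the product acts as the composition.\<close>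

fun cu_act :: "cu2 option \<Rightarrow> bool list \<Rightarrow> bool list option" where
  "cu_act None w = None"
| "cu_act (Some (\<mu>, \<nu>)) w = (if \<exists>g. w = \<nu> @ g then Some (\<mu> @ drop (length \<nu>) w) else None)"

lemma cu_act_mult0:
  "cu_act (cu_mult0 x y) w = (case cu_act y w of None \<Rightarrow> None | Some w' \<Rightarrow> cu_act x w')"
proof (cases x; cases y)
  fix s t assume x: "x = Some s" and y: "y = Some t"
  obtain \<mu> \<nu> where s: "s = (\<mu>, \<nu>)" by fastforce
  obtain \<alpha> \<beta> where t: "t = (\<alpha>, \<beta>)" by fastforce
  show ?thesis
  proof (cases "cu_mult (\<mu>, \<nu>) (\<alpha>, \<beta>)")
    case None
    then have "cu_act (Some (\<mu>, \<nu>)) (\<alpha> @ g) = None" for g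
      by (auto simp: cu_mult_None_iff append_eq_append_conv2)
    then show ?thesis using x y s t None by auto
  next
    case (Some r)
    then consider g where "\<alpha> = \<nu> @ g" "r = (\<mu> @ g, \<beta>)" | g where "\<nu> = \<alpha> @ g" "r = (\<mu>, \<beta> @ g)"
      unfolding cu_mult_Some_iff by blast
    then show ?thesis
      by cases (use x y s t Some in \<open>auto simp: append_eq_append_conv2\<close>)
  qed
qed auto

lemma cu_act_inject:
  assumes "\<And>w. cu_act x w = cu_act y w"
  shows "x = y"
proof (cases x; cases y)
  fix s t assume x: "x = Some s" and y: "y = Some t"
  obtain \<mu> \<nu> where s: "s = (\<mu>, \<nu>)" by fastforce
  obtain \<alpha> \<beta> where t: "t = (\<alpha>, \<beta>)" by fastforce
  have "\<exists>g. \<nu> = \<beta> @ g" using assms[of \<nu>] x y s t by (auto split: if_splits)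
  moreover have "\<exists>g. \<beta> = \<nu> @ g" using assms[of \<beta>] x y s t by (auto split: if_splits)
  ultimately have "\<nu> = \<beta>" by auto
  then show ?thesis using assms[of \<nu>] x y s t by auto
next
  fix t assume "x = None" "y = Some t"
  then show ?thesis using assms[of "snd t"] by (cases t) auto
next
  fix s assume "y = None" "x = Some s"
  then show ?thesis using assms[of "snd s"] by (cases s) auto
qed simp

lemma cu_mult0_assoc: "cu_mult0 (cu_mult0 x y) z = cu_mult0 x (cu_mult0 y z)"
  by (rule cu_act_inject) (simp add: cu_act_mult0 split: option.splits)

lemma cu_mult0_left_eq_Some_iff:
  "cu_mult0 (cu_mult0 (Some s) (Some t)) (Some r) = Some u \<longleftrightarrow>
     (\<exists>q. cu_mult s t = Some q \<and> cu_mult q r = Some u)"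
  by (cases "cu_mult s t") auto

lemma cu_mult0_right_eq_Some_iff:
  "cu_mult0 (Some s) (cu_mult0 (Some t) (Some r)) = Some u \<longleftrightarrow>
     (\<exists>q. cu_mult t r = Some q \<and> cu_mult s q = Some u)"
  by (cases "cu_mult t r") auto

section \<open>Absolutely summable families\<close>

lemma summable_on_of_abs_summable_on_UNIV:
  fixes f :: "'a \<Rightarrow> 'b::banach"
  assumes "(\<lambda>x. norm (f x)) summable_on UNIV"
  shows "f summable_on A"
  by (rule abs_summable_summable, rule summable_on_subset[OF assms]) auto

lemma
  fixes h :: "'a \<Rightarrow> 'c::{banach, real_normed_algebra}" and \<pi> :: "'a \<Rightarrow> 'b option"
  assumes h: "(\<lambda>x. norm (h x)) summable_on UNIV" and G: "\<And>u. norm (G u) \<le> B"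
  shows summable_on_weighted_fibers:
      "(\<lambda>u. G u * (\<Sum>\<^sub>\<infinity>x\<in>{x. \<pi> x = Some u}. h x)) summable_on U"
    and infsum_weighted_fibers:
      "(\<Sum>\<^sub>\<infinity>u\<in>U. G u * (\<Sum>\<^sub>\<infinity>x\<in>{x. \<pi> x = Some u}. h x))
         = (\<Sum>\<^sub>\<infinity>x\<in>{x. \<exists>u\<in>U. \<pi> x = Some u}. G (the (\<pi> x)) * h x)"
proof -
  define S where "S = Sigma U (\<lambda>u. {x. \<pi> x = Some u})"
  define T where "T = {x. \<exists>u\<in>U. \<pi> x = Some u}"
  have inj: "inj_on snd S" unfolding S_def by (auto simp: inj_on_def)
  have img: "snd ` S = T" unfolding S_def T_def by force
  have "(\<lambda>x. norm (G (the (\<pi> x)) * h x)) summable_on T"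
  proof (rule Infinite_Sum.abs_summable_on_comparison_test'[where g="\<lambda>x. B * norm (h x)"])
    show "(\<lambda>x. B * norm (h x)) summable_on T"
      by (rule summable_on_cmult_right, rule summable_on_subset[OF h]) auto
    show "norm (G (the (\<pi> x)) * h x) \<le> B * norm (h x)" for x
      by (rule order_trans[OF norm_mult_ineq]) (simp add: G mult_right_mono)
  qed
  then have "(\<lambda>x. G (the (\<pi> x)) * h x) summable_on T" by (rule abs_summable_summable)
  then have "((\<lambda>x. G (the (\<pi> x)) * h x) \<circ> snd) summable_on S"
    using summable_on_reindex[OF inj] img by metis
  then have sS: "(\<lambda>(u, x). G u * h x) summable_on S"
    by (rule summable_on_cong[THEN iffD1, rotated]) (auto simp: S_def)
  have fiber: "(\<Sum>\<^sub>\<infinity>x\<in>{x. \<pi> x = Some u}. G u * h x) = G u * (\<Sum>\<^sub>\<infinity>x\<in>{x. \<pi> x = Some u}. h x)" for u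
    by (rule infsum_cmult_right) (rule summable_on_of_abs_summable_on_UNIV[OF h])
  from summable_on_Sigma_banach[OF sS[unfolded S_def]]
  show "(\<lambda>u. G u * (\<Sum>\<^sub>\<infinity>x\<in>{x. \<pi> x = Some u}. h x)) summable_on U"
    by (simp add: fiber)
  have "(\<Sum>\<^sub>\<infinity>u\<in>U. G u * (\<Sum>\<^sub>\<infinity>x\<in>{x. \<pi> x = Some u}. h x)) = (\<Sum>\<^sub>\<infinity>(u, x)\<in>S. G u * h x)"
    using infsum_Sigma'_banach[OF sS[unfolded S_def]] by (simp add: fiber S_def)
  also have "\<dots> = (\<Sum>\<^sub>\<infinity>x\<in>S. ((\<lambda>x. G (the (\<pi> x)) * h x) \<circ> snd) x)"
    by (rule infsum_cong) (auto simp: S_def)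
  also have "\<dots> = (\<Sum>\<^sub>\<infinity>x\<in>T. G (the (\<pi> x)) * h x)"
    using infsum_reindex[OF inj] img by metis
  finally show "(\<Sum>\<^sub>\<infinity>u\<in>U. G u * (\<Sum>\<^sub>\<infinity>x\<in>{x. \<pi> x = Some u}. h x))
      = (\<Sum>\<^sub>\<infinity>x\<in>{x. \<exists>u\<in>U. \<pi> x = Some u}. G (the (\<pi> x)) * h x)"
    by (simp add: T_def)
qed

lemma
  fixes h :: "'a \<Rightarrow> 'c::{banach, real_normed_algebra}" and \<pi> :: "'a \<Rightarrow> 'b option"
  assumes h: "(\<lambda>x. norm (h x)) summable_on UNIV"
  shows summable_on_fiber_norms:
      "(\<lambda>u. norm (\<Sum>\<^sub>\<infinity>x\<in>{x. \<pi> x = Some u}. h x)) summable_on U"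
    and infsum_fiber_norms_le:
      "(\<Sum>\<^sub>\<infinity>u\<in>U. norm (\<Sum>\<^sub>\<infinity>x\<in>{x. \<pi> x = Some u}. h x))
         \<le> (\<Sum>\<^sub>\<infinity>x\<in>{x. \<exists>u\<in>U. \<pi> x = Some u}. norm (h x))"
proof -
  have h': "(\<lambda>x. norm (norm (h x))) summable_on UNIV" using h by simp
  have sums: "(\<lambda>u. (\<Sum>\<^sub>\<infinity>x\<in>{x. \<pi> x = Some u}. norm (h x))) summable_on U"
    using summable_on_weighted_fibers[OF h', where G="\<lambda>_. 1" and B=1] by simp
  have eq: "(\<Sum>\<^sub>\<infinity>u\<in>U. (\<Sum>\<^sub>\<infinity>x\<in>{x. \<pi> x = Some u}. norm (h x)))
       = (\<Sum>\<^sub>\<infinity>x\<in>{x. \<exists>u\<in>U. \<pi> x = Some u}. norm (h x))"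
    using infsum_weighted_fibers[OF h', where G="\<lambda>_. 1" and B=1] by simp
  have le: "norm (\<Sum>\<^sub>\<infinity>x\<in>{x. \<pi> x = Some u}. h x) \<le> (\<Sum>\<^sub>\<infinity>x\<in>{x. \<pi> x = Some u}. norm (h x))" for u
    by (rule norm_infsum_bound) (rule summable_on_subset[OF h], auto)
  show norms: "(\<lambda>u. norm (\<Sum>\<^sub>\<infinity>x\<in>{x. \<pi> x = Some u}. h x)) summable_on U"
    by (rule Infinite_Sum.abs_summable_on_comparison_test'[OF sums]) (simp add: le)
  show "(\<Sum>\<^sub>\<infinity>u\<in>U. norm (\<Sum>\<^sub>\<infinity>x\<in>{x. \<pi> x = Some u}. h x))
      \<le> (\<Sum>\<^sub>\<infinity>x\<in>{x. \<exists>u\<in>U. \<pi> x = Some u}. norm (h x))"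
    using infsum_mono[OF norms sums le] eq by simp
qed

lemma infsum_Sigma_reindex:
  fixes F :: "'c \<Rightarrow> 'd::banach"
  assumes F: "(\<lambda>z. norm (F z)) summable_on UNIV" and k: "inj_on k (Sigma A B)"
  shows "(\<Sum>\<^sub>\<infinity>y\<in>A. \<Sum>\<^sub>\<infinity>x\<in>B y. F (k (y, x))) = (\<Sum>\<^sub>\<infinity>z\<in>k ` Sigma A B. F z)"
proof -
  have "(F \<circ> k) summable_on Sigma A B"
    using summable_on_reindex[OF k] summable_on_of_abs_summable_on_UNIV[OF F] by blast
  then have "(\<Sum>\<^sub>\<infinity>y\<in>A. \<Sum>\<^sub>\<infinity>x\<in>B y. F (k (y, x))) = (\<Sum>\<^sub>\<infinity>(y, x)\<in>Sigma A B. F (k (y, x)))"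
    by (intro infsum_Sigma'_banach) (simp add: o_def case_prod_unfold)
  also have "\<dots> = (\<Sum>\<^sub>\<infinity>z\<in>k ` Sigma A B. F z)"
    using infsum_reindex[OF k, of F] by (simp add: case_prod_unfold comp_def)
  finally show ?thesis .
qed

lemma
  fixes f :: "'a \<Rightarrow> 'c::real_normed_div_algebra" and g :: "'b \<Rightarrow> 'c"
  assumes f: "(\<lambda>x. norm (f x)) summable_on UNIV" and g: "(\<lambda>y. norm (g y)) summable_on UNIV"
  shows abs_summable_on_product: "(\<lambda>p. norm (f (fst p) * g (snd p))) summable_on UNIV"
    and infsum_norm_product:
      "(\<Sum>\<^sub>\<infinity>p. norm (f (fst p) * g (snd p))) = (\<Sum>\<^sub>\<infinity>x. norm (f x)) * (\<Sum>\<^sub>\<infinity>y. norm (g y))"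
proof -
  define G where "G = (\<Sum>\<^sub>\<infinity>y. norm (g y))"
  have row: "((\<lambda>y. norm (f x) * norm (g y)) has_sum (norm (f x) * G)) UNIV" for x
    using g unfolding G_def by (intro has_sum_cmult_right) (simp add: summable_iff_has_sum_infsum)
  have rows: "(\<lambda>x. norm (f x) * G) summable_on UNIV"
    using f by (intro summable_on_cmult_left)
  have S: "(\<lambda>(x, y). norm (f x) * norm (g y)) summable_on UNIV \<times> UNIV"
    by (rule summable_on_SigmaI[where g="\<lambda>x. norm (f x) * G"]) (use row rows in auto)
  then show "(\<lambda>p. norm (f (fst p) * g (snd p))) summable_on UNIV"
    by (simp add: norm_mult case_prod_unfold)
  have "(\<Sum>\<^sub>\<infinity>p. norm (f (fst p) * g (snd p))) = (\<Sum>\<^sub>\<infinity>(x, y)\<in>UNIV \<times> UNIV. norm (f x) * norm (g y))"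
    by (simp add: norm_mult case_prod_unfold)
  also have "\<dots> = (\<Sum>\<^sub>\<infinity>x. \<Sum>\<^sub>\<infinity>y. norm (f x) * norm (g y))"
    using infsum_Sigma'_banach[OF S] by simp
  also have "\<dots> = (\<Sum>\<^sub>\<infinity>x. norm (f x) * G)"
    using infsumI[OF row] by simp
  finally show "(\<Sum>\<^sub>\<infinity>p. norm (f (fst p) * g (snd p))) = (\<Sum>\<^sub>\<infinity>x. norm (f x)) * G"
    by (simp add: infsum_cmult_left')
qed

lemma infsum_telescope:
  fixes a :: "nat \<Rightarrow> 'a::banach"
  assumes a: "a summable_on UNIV"
  shows "(\<Sum>\<^sub>\<infinity>k. a k - a (Suc k)) = a 0"
proof -
  have shift: "(\<lambda>k. a (Suc k)) summable_on UNIV"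
    using summable_on_reindex[of Suc UNIV a] summable_on_subset_banach[OF a] by (auto simp: o_def)
  have U: "(UNIV :: nat set) = {0} \<union> Suc ` UNIV" by (auto intro: nat.exhaust)
  have "(\<Sum>\<^sub>\<infinity>k. a k) = (\<Sum>\<^sub>\<infinity>k\<in>{0}. a k) + (\<Sum>\<^sub>\<infinity>k\<in>Suc ` UNIV. a k)"
    by (subst U, rule infsum_Un_disjoint) (auto intro: summable_on_subset_banach[OF a])
  also have "(\<Sum>\<^sub>\<infinity>k\<in>Suc ` UNIV. a k) = (\<Sum>\<^sub>\<infinity>k. a (Suc k))"
    by (subst infsum_reindex) (auto simp: o_def)
  finally have "(\<Sum>\<^sub>\<infinity>k. a k) = a 0 + (\<Sum>\<^sub>\<infinity>k. a (Suc k))" by simp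
  moreover have "(\<Sum>\<^sub>\<infinity>k. a k - a (Suc k)) = (\<Sum>\<^sub>\<infinity>k. a k) - (\<Sum>\<^sub>\<infinity>k. a (Suc k))"
    using infsum_add[OF a summable_on_uminus[THEN iffD2, OF shift]] by (simp add: infsum_uminus)
  ultimately show ?thesis by simp
qed

lemma tendsto_infsum_Compl_zero:
  fixes h :: "'a \<Rightarrow> real"
  assumes h: "h summable_on UNIV" and h0: "\<And>x. h x \<ge> 0"
    and exhaust: "\<And>F. finite F \<Longrightarrow> \<exists>n. F \<subseteq> K n" and mono: "\<And>n m. n \<le> m \<Longrightarrow> K n \<subseteq> K m"
  shows "(\<lambda>n. \<Sum>\<^sub>\<infinity>x\<in>-K n. h x) \<longlonglongrightarrow> 0"
proof (rule LIMSEQ_I)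
  fix r :: real assume r: "r > 0"
  obtain F where F: "finite F" "dist (sum h F) (\<Sum>\<^sub>\<infinity>x. h x) \<le> r/2"
    using infsum_finite_approximation[OF h, of "r/2"] r by auto
  obtain n0 where n0: "F \<subseteq> K n0" using exhaust[OF F(1)] by blast
  have "\<bar>\<Sum>\<^sub>\<infinity>x\<in>-K n. h x\<bar> < r" if "n \<ge> n0" for n
  proof -
    have "(\<Sum>\<^sub>\<infinity>x\<in>-K n. h x) \<le> (\<Sum>\<^sub>\<infinity>x\<in>UNIV - F. h x)"
      using n0 mono[OF that] h0 by (intro infsum_mono_neutral summable_on_subset[OF h]) auto
    also have "\<dots> = (\<Sum>\<^sub>\<infinity>x. h x) - sum h F"
      using F(1) by (simp add: infsum_Diff h)
    also have "\<dots> \<le> r/2" using F(2) unfolding dist_real_def by linarith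
    finally show ?thesis using r h0 infsum_nonneg[of "-K n" h] by auto
  qed
  then show "\<exists>n0. \<forall>n\<ge>n0. norm ((\<Sum>\<^sub>\<infinity>x\<in>-K n. h x) - 0) < r" by auto
qed

section \<open>The Banach algebra l^1(Cu_2 - {0})\<close>

lemma l1A_norm_summable: "f \<in> l1A \<Longrightarrow> (\<lambda>s. norm (f s)) summable_on A"
  by (rule summable_on_subset[of _ UNIV]) (auto simp: l1A_def)

lemma l1norm_nonneg: "l1norm f \<ge> 0"
  by (simp add: l1norm_def infsum_nonneg)

lemma norm_le_l1norm: "f \<in> l1A \<Longrightarrow> norm (f s) \<le> l1norm f"
  unfolding l1norm_def
  by (rule order_trans[of _ "\<Sum>\<^sub>\<infinity>t\<in>{s}. norm (f t)"], simp)
     (rule infsum_mono_neutral, auto simp: l1A_def)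

lemma l1A_zero: "(\<lambda>s. 0) \<in> l1A"
  by (simp add: l1A_def)

lemma l1A_add: "f \<in> l1A \<Longrightarrow> g \<in> l1A \<Longrightarrow> (\<lambda>s. f s + g s) \<in> l1A"
  unfolding l1A_def mem_Collect_eq
  by (rule Infinite_Sum.abs_summable_on_comparison_test'[where g="\<lambda>s. norm (f s) + norm (g s)"])
     (auto intro: summable_on_add norm_triangle_ineq)

lemma l1A_mult_const: "f \<in> l1A \<Longrightarrow> (\<lambda>s. c * f s) \<in> l1A"
  unfolding l1A_def mem_Collect_eq by (simp add: norm_mult summable_on_cmult_right)

lemma l1A_diff: "f \<in> l1A \<Longrightarrow> g \<in> l1A \<Longrightarrow> (\<lambda>s. f s - g s) \<in> l1A"
  using l1A_add[of f "\<lambda>s. (-1) * g s"] l1A_mult_const[of g "-1"] by simp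

lemma l1A_sum: "finite I \<Longrightarrow> (\<And>i. i \<in> I \<Longrightarrow> F i \<in> l1A) \<Longrightarrow> (\<lambda>s. \<Sum>i\<in>I. F i s) \<in> l1A"
  by (induction I rule: finite_induct) (simp_all add: l1A_zero l1A_add)

lemma l1norm_mult_const: "l1norm (\<lambda>s. c * f s) = norm c * l1norm f"
  unfolding l1norm_def by (simp add: norm_mult infsum_cmult_right')

lemma l1A_finite_support:
  assumes "finite S" and "\<And>s. s \<notin> S \<Longrightarrow> f s = 0"
  shows "f \<in> l1A"
proof -
  have "(\<lambda>s. norm (f s)) summable_on S" using assms(1) by simp
  then show ?thesis unfolding l1A_def mem_Collect_eq
    by (rule summable_on_cong_neutral[THEN iffD1, rotated -1]) (use assms(2) in auto)
qed

lemma l1delta_in_l1A: "l1delta s \<in> l1A"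
  by (rule l1A_finite_support[of "{s}"]) (auto simp: l1delta_def)

lemma l1unit_in_l1A: "l1unit \<in> l1A"
  by (simp add: l1unit_def l1delta_in_l1A)

lemma l1norm_l1delta: "l1norm (l1delta s) = 1"
proof -
  have "l1norm (l1delta s) = (\<Sum>\<^sub>\<infinity>t\<in>{s}. norm (l1delta s t))"
    unfolding l1norm_def by (rule infsum_cong_neutral) (auto simp: l1delta_def)
  then show ?thesis by (simp add: l1delta_def)
qed

lemma abs_summable_on_l1_product:
  "f \<in> l1A \<Longrightarrow> g \<in> l1A \<Longrightarrow> (\<lambda>p. norm (f (fst p) * g (snd p))) summable_on UNIV"
  by (rule abs_summable_on_product) (simp_all add: l1A_def)

lemma summable_on_l1_product:
  "f \<in> l1A \<Longrightarrow> g \<in> l1A \<Longrightarrow> (\<lambda>p. f (fst p) * g (snd p)) summable_on A"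
  by (rule summable_on_of_abs_summable_on_UNIV) (rule abs_summable_on_l1_product)

lemma
  assumes f: "f \<in> l1A" and g: "g \<in> l1A"
  shows l1conv_in_l1A: "f #\<^sub>\<ell> g \<in> l1A"
    and l1norm_l1conv_le: "l1norm (f #\<^sub>\<ell> g) \<le> l1norm f * l1norm g"
proof -
  note h = abs_summable_on_l1_product[OF f g]
  show "f #\<^sub>\<ell> g \<in> l1A"
    using summable_on_fiber_norms[OF h, of "\<lambda>p. cu_mult (fst p) (snd p)" UNIV]
    by (simp add: l1A_def l1conv_def)
  have "l1norm (f #\<^sub>\<ell> g) \<le> (\<Sum>\<^sub>\<infinity>p\<in>{p. \<exists>u. cu_mult (fst p) (snd p) = Some u}. norm (f (fst p) * g (snd p)))"
    using infsum_fiber_norms_le[OF h, of "\<lambda>p. cu_mult (fst p) (snd p)" UNIV]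
    by (simp add: l1norm_def l1conv_def)
  also have "\<dots> \<le> (\<Sum>\<^sub>\<infinity>p. norm (f (fst p) * g (snd p)))"
    by (rule infsum_mono_neutral) (use h in \<open>auto intro: summable_on_subset\<close>)
  also have "\<dots> = l1norm f * l1norm g"
    using infsum_norm_product f g by (simp add: l1A_def l1norm_def)
  finally show "l1norm (f #\<^sub>\<ell> g) \<le> l1norm f * l1norm g" .
qed

lemma l1conv_assoc:
  assumes f: "f \<in> l1A" and g: "g \<in> l1A" and h: "h \<in> l1A"
  shows "(f #\<^sub>\<ell> g) #\<^sub>\<ell> h = f #\<^sub>\<ell> (g #\<^sub>\<ell> h)"
proof
  fix u
  define F where "F z = f (fst z) * (g (fst (snd z)) * h (snd (snd z)))" for z :: "cu2 \<times> cu2 \<times> cu2"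
  define fib where "fib u = {p :: cu2 \<times> cu2. cu_mult (fst p) (snd p) = Some u}" for u
  have F: "(\<lambda>z. norm (F z)) summable_on UNIV"
    using abs_summable_on_product[OF _ abs_summable_on_l1_product[OF g h]] f
    by (simp add: F_def l1A_def)
  have "((f #\<^sub>\<ell> g) #\<^sub>\<ell> h) u = (\<Sum>\<^sub>\<infinity>p\<in>fib u. (\<Sum>\<^sub>\<infinity>q\<in>fib (fst p). f (fst q) * g (snd q)) * h (snd p))"
    by (simp add: l1conv_def fib_def)
  also have "\<dots> = (\<Sum>\<^sub>\<infinity>p\<in>fib u. \<Sum>\<^sub>\<infinity>q\<in>fib (fst p). F ((\<lambda>(p, q). (fst q, snd q, snd p)) (p, q)))"
    by (intro infsum_cong, subst infsum_cmult_left[symmetric])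
       (auto simp: F_def mult.assoc intro: summable_on_l1_product f g)
  also have "\<dots> = (\<Sum>\<^sub>\<infinity>z\<in>(\<lambda>(p, q). (fst q, snd q, snd p)) ` Sigma (fib u) (\<lambda>p. fib (fst p)). F z)"
    by (rule infsum_Sigma_reindex[OF F]) (auto simp: inj_on_def fib_def)
  also have "(\<lambda>(p, q). (fst q, snd q, snd p)) ` Sigma (fib u) (\<lambda>p. fib (fst p))
      = {z. cu_mult0 (cu_mult0 (Some (fst z)) (Some (fst (snd z)))) (Some (snd (snd z))) = Some u}"
    unfolding cu_mult0_left_eq_Some_iff by (auto simp: fib_def image_def)
  also have "\<dots> = {z. cu_mult0 (Some (fst z)) (cu_mult0 (Some (fst (snd z))) (Some (snd (snd z)))) = Some u}"
    by (simp only: cu_mult0_assoc)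
  also have "\<dots> = (\<lambda>(p, q). (fst p, fst q, snd q)) ` Sigma (fib u) (\<lambda>p. fib (snd p))"
    unfolding cu_mult0_right_eq_Some_iff by (auto simp: fib_def image_def)
  also have "(\<Sum>\<^sub>\<infinity>z\<in>(\<lambda>(p, q). (fst p, fst q, snd q)) ` Sigma (fib u) (\<lambda>p. fib (snd p)). F z)
      = (\<Sum>\<^sub>\<infinity>p\<in>fib u. \<Sum>\<^sub>\<infinity>q\<in>fib (snd p). F ((\<lambda>(p, q). (fst p, fst q, snd q)) (p, q)))"
    by (rule infsum_Sigma_reindex[OF F, symmetric]) (auto simp: inj_on_def fib_def)
  also have "\<dots> = (\<Sum>\<^sub>\<infinity>p\<in>fib u. f (fst p) * (\<Sum>\<^sub>\<infinity>q\<in>fib (snd p). g (fst q) * h (snd q)))"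
    by (intro infsum_cong, subst infsum_cmult_right[symmetric])
       (auto simp: F_def intro: summable_on_l1_product g h)
  also have "\<dots> = (f #\<^sub>\<ell> (g #\<^sub>\<ell> h)) u"
    by (simp add: l1conv_def fib_def)
  finally show "((f #\<^sub>\<ell> g) #\<^sub>\<ell> h) u = (f #\<^sub>\<ell> (g #\<^sub>\<ell> h)) u" .
qed

lemma l1conv_l1delta_left: "(l1delta s #\<^sub>\<ell> f) u = (\<Sum>\<^sub>\<infinity>q\<in>{q. cu_mult s q = Some u}. f q)"
proof -
  have "(l1delta s #\<^sub>\<ell> f) u = (\<Sum>\<^sub>\<infinity>p\<in>Pair s ` {q. cu_mult s q = Some u}. f (snd p))"
    unfolding l1conv_def by (rule infsum_cong_neutral) (auto simp: l1delta_def)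
  also have "\<dots> = (\<Sum>\<^sub>\<infinity>q\<in>{q. cu_mult s q = Some u}. f q)"
    by (subst infsum_reindex) (auto simp: o_def inj_on_def)
  finally show ?thesis .
qed

lemma l1conv_l1delta_right: "(f #\<^sub>\<ell> l1delta s) u = (\<Sum>\<^sub>\<infinity>q\<in>{q. cu_mult q s = Some u}. f q)"
proof -
  have "(f #\<^sub>\<ell> l1delta s) u = (\<Sum>\<^sub>\<infinity>p\<in>(\<lambda>q. (q, s)) ` {q. cu_mult q s = Some u}. f (fst p))"
    unfolding l1conv_def by (rule infsum_cong_neutral) (auto simp: l1delta_def)
  also have "\<dots> = (\<Sum>\<^sub>\<infinity>q\<in>{q. cu_mult q s = Some u}. f q)"
    by (subst infsum_reindex) (auto simp: o_def inj_on_def)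
  finally show ?thesis .
qed

lemma l1conv_l1unit: "f #\<^sub>\<ell> l1unit = f"
  unfolding l1unit_def by (rule ext) (simp add: l1conv_l1delta_right cu_mult_unit_right)

lemma l1conv_add_right:
  "f \<in> l1A \<Longrightarrow> g \<in> l1A \<Longrightarrow> h \<in> l1A \<Longrightarrow> f #\<^sub>\<ell> (\<lambda>s. g s + h s) = (\<lambda>u. (f #\<^sub>\<ell> g) u + (f #\<^sub>\<ell> h) u)"
  by (rule ext) (simp add: l1conv_def distrib_left infsum_add summable_on_l1_product)

lemma l1conv_mult_const_right: "f #\<^sub>\<ell> (\<lambda>s. c * g s) = (\<lambda>u. c * (f #\<^sub>\<ell> g) u)"
  by (rule ext) (simp add: l1conv_def infsum_cmult_right' mult.left_commute)

lemma l1conv_mult_const_left: "(\<lambda>s. c * g s) #\<^sub>\<ell> f = (\<lambda>u. c * (g #\<^sub>\<ell> f) u)"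
  by (rule ext) (simp add: l1conv_def infsum_cmult_right' mult.assoc)

section \<open>Neumann series\<close>

primrec l1pow :: "(cu2 \<Rightarrow> complex) \<Rightarrow> nat \<Rightarrow> cu2 \<Rightarrow> complex" where
  "l1pow w 0 = l1unit"
| "l1pow w (Suc k) = l1pow w k #\<^sub>\<ell> w"

lemma l1pow_in_l1A: "w \<in> l1A \<Longrightarrow> l1pow w k \<in> l1A"
  by (induction k) (simp_all add: l1unit_in_l1A l1conv_in_l1A)

lemma l1norm_l1pow_le: "w \<in> l1A \<Longrightarrow> l1norm (l1pow w k) \<le> l1norm w ^ k"
proof (induction k)
  case 0
  then show ?case by (simp add: l1unit_def l1norm_l1delta)
next
  case (Suc k)
  have "l1norm (l1pow w (Suc k)) \<le> l1norm (l1pow w k) * l1norm w"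
    using l1norm_l1conv_le[OF l1pow_in_l1A Suc.prems] Suc.prems by simp
  also have "\<dots> \<le> l1norm w ^ k * l1norm w"
    using Suc by (simp add: mult_right_mono l1norm_nonneg)
  finally show ?case by (simp add: mult.commute)
qed

lemma
  assumes F: "\<And>k. F k \<in> l1A" and norms: "(\<lambda>k. l1norm (F k)) summable_on UNIV"
  shows summable_on_l1_series: "(\<lambda>k. F k u) summable_on UNIV"
    and l1_series_in_l1A: "(\<lambda>u. \<Sum>\<^sub>\<infinity>k. F k u) \<in> l1A"
proof -
  have pointwise: "(\<lambda>k. F k u) summable_on UNIV" for u
  proof (rule abs_summable_summable)
    show "(\<lambda>k. norm (F k u)) summable_on UNIV"
      by (rule Infinite_Sum.abs_summable_on_comparison_test'[OF norms norm_le_l1norm[OF F]])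
  qed
  then show "(\<lambda>k. F k u) summable_on UNIV" .
  have row: "((\<lambda>u. norm (F k u)) has_sum l1norm (F k)) UNIV" for k
    using F[of k] unfolding l1A_def l1norm_def by (simp add: has_sum_infsum)
  have "(\<lambda>(k, u). norm (F k u)) summable_on UNIV \<times> UNIV"
    by (rule summable_on_SigmaI[where g="\<lambda>k. l1norm (F k)"]) (use row norms in auto)
  then have "(\<lambda>(u, k). norm (F k u)) summable_on UNIV \<times> UNIV"
    by (subst summable_on_swap) (simp add: case_prod_unfold)
  then have rows: "(\<lambda>u. \<Sum>\<^sub>\<infinity>k. norm (F k u)) summable_on UNIV"
    using summable_on_Sigma_banach[of "\<lambda>u k. norm (F k u)" UNIV "\<lambda>_. UNIV"] by simp
  have "norm (\<Sum>\<^sub>\<infinity>k. F k u) \<le> (\<Sum>\<^sub>\<infinity>k. norm (F k u))" for u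
    by (rule norm_infsum_bound) (simp add: pointwise summable_on_iff_abs_summable_on_complex[symmetric])
  then show "(\<lambda>u. \<Sum>\<^sub>\<infinity>k. F k u) \<in> l1A"
    unfolding l1A_def mem_Collect_eq
    by (rule Infinite_Sum.abs_summable_on_comparison_test'[OF rows])
qed

lemma l1conv_l1_series_left:
  assumes F: "\<And>k. F k \<in> l1A" and norms: "(\<lambda>k. l1norm (F k)) summable_on UNIV" and y: "y \<in> l1A"
  shows "((\<lambda>u. \<Sum>\<^sub>\<infinity>k. F k u) #\<^sub>\<ell> y) u = (\<Sum>\<^sub>\<infinity>k. (F k #\<^sub>\<ell> y) u)"
proof -
  define P where "P = {p :: cu2 \<times> cu2. cu_mult (fst p) (snd p) = Some u}"
  have row: "((\<lambda>p. norm (F k (fst p)) * norm (y (snd p))) has_sum l1norm (F k) * l1norm y) UNIV" for k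
  proof -
    have "(\<lambda>p. norm (F k (fst p)) * norm (y (snd p))) summable_on UNIV"
      using abs_summable_on_l1_product[OF F[of k] y] unfolding norm_mult .
    moreover have "(\<Sum>\<^sub>\<infinity>p. norm (F k (fst p)) * norm (y (snd p))) = l1norm (F k) * l1norm y"
      using infsum_norm_product[of "F k" y] F[of k] y unfolding l1A_def l1norm_def norm_mult by simp
    ultimately show ?thesis using has_sum_infsum by fastforce
  qed
  have "(\<lambda>(k, p). norm (F k (fst p)) * norm (y (snd p))) summable_on UNIV \<times> UNIV"
    by (rule summable_on_SigmaI[where g="\<lambda>k. l1norm (F k) * l1norm y"])
       (use row summable_on_cmult_left[OF norms] in auto)
  then have "(\<lambda>(p, k). norm (F k (fst p) * y (snd p))) summable_on UNIV \<times> UNIV"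
    by (subst summable_on_swap) (simp add: case_prod_unfold norm_mult)
  then have "(\<lambda>x. norm ((\<lambda>(p, k). F k (fst p) * y (snd p)) x)) summable_on UNIV \<times> UNIV"
    by (simp add: case_prod_unfold)
  then have "(\<lambda>x. norm ((\<lambda>(p, k). F k (fst p) * y (snd p)) x)) summable_on P \<times> UNIV"
    by (rule summable_on_subset) simp
  then have double: "(\<lambda>(p, k). F k (fst p) * y (snd p)) summable_on P \<times> UNIV"
    by (rule abs_summable_summable)
  have "((\<lambda>u. \<Sum>\<^sub>\<infinity>k. F k u) #\<^sub>\<ell> y) u = (\<Sum>\<^sub>\<infinity>p\<in>P. \<Sum>\<^sub>\<infinity>k. F k (fst p) * y (snd p))"
    unfolding l1conv_def P_def
    by (rule infsum_cong, rule infsum_cmult_left[symmetric]) (rule summable_on_l1_series[OF F norms])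
  also have "\<dots> = (\<Sum>\<^sub>\<infinity>k. \<Sum>\<^sub>\<infinity>p\<in>P. F k (fst p) * y (snd p))"
    by (rule infsum_swap_banach) (use double in simp)
  also have "\<dots> = (\<Sum>\<^sub>\<infinity>k. (F k #\<^sub>\<ell> y) u)"
    by (simp add: l1conv_def P_def)
  finally show ?thesis .
qed

lemma l1unit_plus_small_left_invertible:
  assumes z: "z \<in> l1A" and small: "l1norm z < 1"
  shows "\<exists>v\<in>l1A. v #\<^sub>\<ell> (\<lambda>s. l1unit s + z s) = l1unit"
proof -
  define w where "w = (\<lambda>s. (-1) * z s)"
  have w: "w \<in> l1A" "l1norm w = l1norm z"
    using l1A_mult_const[OF z, of "-1"] l1norm_mult_const[of "-1" z] by (simp_all add: w_def)
  define F where "F = l1pow w"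
  have F: "F k \<in> l1A" for k by (simp add: F_def l1pow_in_l1A w)
  have "(\<lambda>k. l1norm z ^ k) summable_on UNIV"
    using small l1norm_nonneg
    by (intro summable_nonneg_imp_summable_on summable_geometric) auto
  then have norms: "(\<lambda>k. l1norm (F k)) summable_on UNIV"
    using Infinite_Sum.abs_summable_on_comparison_test'[of "\<lambda>k. l1norm z ^ k" UNIV "\<lambda>k. l1norm (F k)"]
      l1norm_l1pow_le[OF w(1)] l1norm_nonneg w(2) by (simp add: F_def)
  define v where "v = (\<lambda>u. \<Sum>\<^sub>\<infinity>k. F k u)"
  have "(v #\<^sub>\<ell> (\<lambda>s. l1unit s + z s)) u = l1unit u" for u
  proof -
    have step: "(F k #\<^sub>\<ell> (\<lambda>s. l1unit s + z s)) u = F k u - F (Suc k) u" for k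
    proof -
      have "F (Suc k) = (\<lambda>u. - (F k #\<^sub>\<ell> z) u)"
        using l1conv_mult_const_right[of "F k" "-1" z] by (simp add: F_def w_def)
      then show ?thesis
        by (simp add: l1conv_add_right[OF F l1unit_in_l1A z] l1conv_l1unit)
    qed
    have "(v #\<^sub>\<ell> (\<lambda>s. l1unit s + z s)) u = (\<Sum>\<^sub>\<infinity>k. F k u - F (Suc k) u)"
      unfolding v_def step[symmetric]
      by (rule l1conv_l1_series_left[OF F norms l1A_add[OF l1unit_in_l1A z]])
    also have "\<dots> = l1unit u"
      using infsum_telescope[OF summable_on_l1_series[OF F norms]] by (simp add: F_def)
    finally show ?thesis .
  qed
  then show ?thesis
    using l1_series_in_l1A[OF F norms] unfolding v_def by blast
qed

section \<open>Dominant sandwiches\<close>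

lemma l1_left_invertible_of_dominant_unit_coeff:
  assumes y: "y \<in> l1A" and dominant: "(\<Sum>\<^sub>\<infinity>u\<in>-{cu_e}. norm (y u)) < norm (y cu_e)"
  shows "\<exists>v\<in>l1A. v #\<^sub>\<ell> y = l1unit"
proof -
  define l where "l = y cu_e"
  have l: "l \<noteq> 0" using dominant infsum_nonneg[of "-{cu_e}" "\<lambda>u. norm (y u)"] by (auto simp: l_def)
  define r where "r = (\<lambda>s. if s = cu_e then 0 else y s)"
  define z where "z = (\<lambda>s. (1/l) * r s)"
  have r: "r \<in> l1A"
    using y unfolding l1A_def r_def
    by (auto intro: Infinite_Sum.abs_summable_on_comparison_test'[where g="\<lambda>s. norm (y s)"])
  have "l1norm r = (\<Sum>\<^sub>\<infinity>u\<in>-{cu_e}. norm (y u))"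
    unfolding l1norm_def r_def by (rule infsum_cong_neutral) auto
  then have small: "l1norm z < 1"
    using dominant l unfolding z_def l1norm_mult_const by (simp add: l_def norm_divide field_simps)
  obtain v where v: "v \<in> l1A" and vz: "v #\<^sub>\<ell> (\<lambda>s. l1unit s + z s) = l1unit"
    using l1unit_plus_small_left_invertible[OF _ small] l1A_mult_const[OF r] unfolding z_def by blast
  have "(\<lambda>s. (1/l) * v s) #\<^sub>\<ell> y = v #\<^sub>\<ell> (\<lambda>s. (1/l) * y s)"
    by (simp only: l1conv_mult_const_left l1conv_mult_const_right)
  also have "(\<lambda>s. (1/l) * y s) = (\<lambda>s. l1unit s + z s)"
    using l by (auto simp: z_def r_def l_def l1unit_def l1delta_def field_simps)
  finally have "(\<lambda>s. (1/l) * v s) #\<^sub>\<ell> y = l1unit"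
    using vz by simp
  then show ?thesis using l1A_mult_const[OF v] by blast
qed

definition cu_mult3 :: "cu2 \<Rightarrow> cu2 \<Rightarrow> cu2 \<Rightarrow> cu2 option" where
  "cu_mult3 s t r = cu_mult0 (cu_mult0 (Some s) (Some t)) (Some r)"

lemma l1conv_sandwich_l1delta:
  assumes a: "a \<in> l1A"
  shows "((l1delta B #\<^sub>\<ell> a) #\<^sub>\<ell> l1delta C) u = (\<Sum>\<^sub>\<infinity>s\<in>{s. cu_mult3 B s C = Some u}. a s)"
proof -
  have "((l1delta B #\<^sub>\<ell> a) #\<^sub>\<ell> l1delta C) u
      = (\<Sum>\<^sub>\<infinity>p\<in>{p. cu_mult p C = Some u}. \<Sum>\<^sub>\<infinity>q\<in>{q. cu_mult B q = Some p}. a (snd (p, q)))"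
    by (simp add: l1conv_l1delta_left l1conv_l1delta_right)
  also have "\<dots> = (\<Sum>\<^sub>\<infinity>q\<in>snd ` Sigma {p. cu_mult p C = Some u} (\<lambda>p. {q. cu_mult B q = Some p}). a q)"
    by (rule infsum_Sigma_reindex) (use a in \<open>auto simp: l1A_def inj_on_def\<close>)
  also have "snd ` Sigma {p. cu_mult p C = Some u} (\<lambda>p. {q. cu_mult B q = Some p}) = {s. cu_mult3 B s C = Some u}"
    unfolding cu_mult3_def cu_mult0_left_eq_Some_iff by force
  finally show ?thesis .
qed

text \<open>The coefficient of the unit in the sandwich delta_B # a # delta_C dominates the mass that
  a sends elsewhere; then delta_B # a # delta_C is invertible by a Neumann series.\<close>

definition dominant_sandwich :: "(cu2 \<Rightarrow> complex) \<Rightarrow> cu2 \<Rightarrow> cu2 \<Rightarrow> bool" where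
  "dominant_sandwich a B C \<longleftrightarrow>
     (\<Sum>\<^sub>\<infinity>s\<in>{s. \<exists>u\<in>-{cu_e}. cu_mult3 B s C = Some u}. norm (a s))
       < norm (\<Sum>\<^sub>\<infinity>s\<in>{s. cu_mult3 B s C = Some cu_e}. a s)"

lemma dominant_sandwich_imp_unit:
  assumes a: "a \<in> l1A" and "dominant_sandwich a B C"
  shows "\<exists>b\<in>l1A. \<exists>c\<in>l1A. (b #\<^sub>\<ell> a) #\<^sub>\<ell> c = l1unit"
proof -
  define y where "y = (l1delta B #\<^sub>\<ell> a) #\<^sub>\<ell> l1delta C"
  have y: "y \<in> l1A" unfolding y_def by (intro l1conv_in_l1A l1delta_in_l1A a)
  have "(\<Sum>\<^sub>\<infinity>u\<in>-{cu_e}. norm (y u)) \<le> (\<Sum>\<^sub>\<infinity>s\<in>{s. \<exists>u\<in>-{cu_e}. cu_mult3 B s C = Some u}. norm (a s))"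
    unfolding y_def l1conv_sandwich_l1delta[OF a]
    by (rule infsum_fiber_norms_le) (use a in \<open>simp add: l1A_def\<close>)
  then have "(\<Sum>\<^sub>\<infinity>u\<in>-{cu_e}. norm (y u)) < norm (y cu_e)"
    using assms(2) by (simp add: dominant_sandwich_def y_def l1conv_sandwich_l1delta[OF a])
  then obtain v where v: "v \<in> l1A" and vy: "v #\<^sub>\<ell> y = l1unit"
    using l1_left_invertible_of_dominant_unit_coeff[OF y] by blast
  have "((v #\<^sub>\<ell> l1delta B) #\<^sub>\<ell> a) #\<^sub>\<ell> l1delta C = v #\<^sub>\<ell> y"
    unfolding y_def
    by (simp add: l1conv_assoc l1conv_in_l1A l1delta_in_l1A a v)
  then show ?thesis
    using vy v by (metis l1conv_in_l1A l1delta_in_l1A)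
qed

section \<open>The ideal J\<close>

lemma f0_in_l1A: "f0 \<in> l1A"
  unfolding f0_def l1unit_def by (intro l1A_diff l1delta_in_l1A)

lemma J_minimal: "l1_ideal S \<Longrightarrow> l1_closed S \<Longrightarrow> f0 \<in> S \<Longrightarrow> J \<subseteq> S"
  unfolding J_def by blast

lemma f0_in_J: "f0 \<in> J"
  unfolding J_def by blast

lemma l1_closed_J: "l1_closed J"
  unfolding J_def l1_closed_def by blast

lemma J_zero: "(\<lambda>s. 0) \<in> J"
  unfolding J_def l1_ideal_def by blast

lemma J_add: "f \<in> J \<Longrightarrow> g \<in> J \<Longrightarrow> (\<lambda>s. f s + g s) \<in> J"
  unfolding J_def l1_ideal_def by blast

lemma J_mult_const: "f \<in> J \<Longrightarrow> (\<lambda>s. c * f s) \<in> J"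
  unfolding J_def l1_ideal_def by blast

lemma J_l1conv_left: "a \<in> l1A \<Longrightarrow> f \<in> J \<Longrightarrow> a #\<^sub>\<ell> f \<in> J"
  unfolding J_def l1_ideal_def by blast

lemma J_l1conv_right: "a \<in> l1A \<Longrightarrow> f \<in> J \<Longrightarrow> f #\<^sub>\<ell> a \<in> J"
  unfolding J_def l1_ideal_def by blast

lemma J_sum: "finite I \<Longrightarrow> (\<And>i. i \<in> I \<Longrightarrow> F i \<in> J) \<Longrightarrow> (\<lambda>s. \<Sum>i\<in>I. F i s) \<in> J"
  by (induction I rule: finite_induct) (simp_all add: J_zero J_add)

lemma cu_mult3_outer: "cu_mult3 (\<mu>, []) s ([], \<nu>) = Some (\<mu> @ fst s, \<nu> @ snd s)"
  by (cases s) (simp add: cu_mult3_def cu_mult_def)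

text \<open>Conjugating f_0 by s_mu and s_nu^* gives the relation
  s_mu s_nu^* = s_mu1 s_nu1^* + s_mu2 s_nu2^* in the quotient.\<close>

lemma l1delta_minus_children_in_J:
  "(\<lambda>t. l1delta (\<mu>, \<nu>) t - l1delta (\<mu> @ [False], \<nu> @ [False]) t - l1delta (\<mu> @ [True], \<nu> @ [True]) t) \<in> J"
proof -
  have "(l1delta (\<mu>, []) #\<^sub>\<ell> f0) #\<^sub>\<ell> l1delta ([], \<nu>) \<in> J"
    by (intro J_l1conv_right J_l1conv_left l1delta_in_l1A f0_in_J)
  moreover have "(l1delta (\<mu>, []) #\<^sub>\<ell> f0) #\<^sub>\<ell> l1delta ([], \<nu>)
      = (\<lambda>t. l1delta (\<mu>, \<nu>) t - l1delta (\<mu> @ [False], \<nu> @ [False]) t - l1delta (\<mu> @ [True], \<nu> @ [True]) t)"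
  proof
    fix u
    have sandwich: "((l1delta (\<mu>, []) #\<^sub>\<ell> f0) #\<^sub>\<ell> l1delta ([], \<nu>)) u
        = (\<Sum>\<^sub>\<infinity>s\<in>{s. u = (\<mu> @ fst s, \<nu> @ snd s)}. f0 s)"
      by (simp add: l1conv_sandwich_l1delta[OF f0_in_l1A] cu_mult3_outer eq_commute)
    show "((l1delta (\<mu>, []) #\<^sub>\<ell> f0) #\<^sub>\<ell> l1delta ([], \<nu>)) u
        = l1delta (\<mu>, \<nu>) u - l1delta (\<mu> @ [False], \<nu> @ [False]) u - l1delta (\<mu> @ [True], \<nu> @ [True]) u"
    proof (cases "\<exists>s. u = (\<mu> @ fst s, \<nu> @ snd s)")
      case True
      then obtain s where s: "u = (\<mu> @ fst s, \<nu> @ snd s)" by blast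
      then have "{s. u = (\<mu> @ fst s, \<nu> @ snd s)} = {s}" by (auto simp: prod_eq_iff)
      then show ?thesis using sandwich s by (cases s) (auto simp: f0_def l1unit_def l1delta_def cu_e_def)
    next
      case False
      then have "u \<noteq> (\<mu>, \<nu>)" "u \<noteq> (\<mu> @ [False], \<nu> @ [False])" "u \<noteq> (\<mu> @ [True], \<nu> @ [True])"
        by (metis append_Nil2 fst_conv snd_conv)+
      with False show ?thesis using sandwich by (simp add: l1delta_def)
    qed
  qed
  ultimately show ?thesis by simp
qed

definition l1pad :: "nat \<Rightarrow> cu2 \<Rightarrow> cu2 \<Rightarrow> complex" where
  "l1pad m s = (\<lambda>t. \<Sum>g\<in>{g. length g = m}. l1delta (fst s @ g, snd s @ g) t)"

lemma finite_words_length_eq: "finite {g :: bool list. length g = m}"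
  using finite_lists_length_eq[of "UNIV :: bool set" m] by simp

lemma words_length_Suc:
  "{g :: bool list. length g = Suc m} = (\<lambda>(g, b). g @ [b]) ` ({g. length g = m} \<times> UNIV)"
proof -
  have "w \<in> (\<lambda>(g, b). g @ [b]) ` ({g. length g = m} \<times> UNIV)" if "length w = Suc m" for w :: "bool list"
    using that by (cases w rule: rev_cases) auto
  then show ?thesis by auto
qed

lemma l1pad_Suc:
  "l1pad (Suc m) s t = (\<Sum>g\<in>{g. length g = m}.
     l1delta (fst s @ g @ [False], snd s @ g @ [False]) t + l1delta (fst s @ g @ [True], snd s @ g @ [True]) t)"
proof -
  have inj: "inj_on (\<lambda>(g, b). g @ [b]) ({g :: bool list. length g = m} \<times> UNIV)"
    by (auto simp: inj_on_def)
  have "l1pad (Suc m) s t = (\<Sum>x\<in>{g. length g = m} \<times> UNIV. l1delta (fst s @ fst x @ [snd x], snd s @ fst x @ [snd x]) t)"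
    unfolding l1pad_def words_length_Suc by (subst sum.reindex[OF inj]) (simp add: case_prod_unfold)
  also have "\<dots> = (\<Sum>g\<in>{g. length g = m}. \<Sum>b\<in>UNIV. l1delta (fst s @ g @ [b], snd s @ g @ [b]) t)"
    by (simp add: sum.cartesian_product case_prod_unfold)
  finally show ?thesis by (simp add: UNIV_bool add.commute)
qed

lemma l1delta_minus_l1pad_in_J: "(\<lambda>t. l1delta s t - l1pad m s t) \<in> J"
proof (induction m)
  case 0
  have "l1pad 0 s = l1delta s" by (rule ext) (simp add: l1pad_def)
  then show ?case by (simp add: J_zero)
next
  case (Suc m)
  have "(\<lambda>t. \<Sum>g\<in>{g. length g = m}. l1delta (fst s @ g, snd s @ g) t
      - l1delta ((fst s @ g) @ [False], (snd s @ g) @ [False]) t - l1delta ((fst s @ g) @ [True], (snd s @ g) @ [True]) t) \<in> J"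
    by (rule J_sum[OF finite_words_length_eq]) (rule l1delta_minus_children_in_J)
  from J_add[OF Suc.IH this] show ?case
    unfolding l1pad_Suc by (simp add: l1pad_def sum_subtractf algebra_simps)
qed

section \<open>Truncation and padding\<close>

definition cu_level :: "cu2 \<Rightarrow> nat" where
  "cu_level s = min (length (fst s)) (length (snd s))"

definition cu_box :: "nat \<Rightarrow> cu2 set" where
  "cu_box N = {s. cu_level s \<le> N \<and> length (fst s) \<le> cu_level s + N \<and> length (snd s) \<le> cu_level s + N}"

definition cu_layer :: "nat \<Rightarrow> cu2 set" where
  "cu_layer N = {u. cu_level u = N \<and> length (fst u) \<le> 2 * N \<and> length (snd u) \<le> 2 * N}"

definition cu_ancestors :: "cu2 \<Rightarrow> cu2 set" where
  "cu_ancestors u = {s. \<exists>g. fst u = fst s @ g \<and> snd u = snd s @ g}"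

text \<open>Padding every s in cu_box N down to level N lands in cu_layer N, so modulo J the
  restriction of a to cu_box N equals the following function supported on cu_layer N.\<close>

definition pushdown :: "(cu2 \<Rightarrow> complex) \<Rightarrow> nat \<Rightarrow> cu2 \<Rightarrow> complex" where
  "pushdown a N = (\<lambda>u. if u \<in> cu_layer N then (\<Sum>s\<in>cu_ancestors u. a s) else 0)"

lemma finite_pairs_length_le: "finite {s :: cu2. length (fst s) \<le> n \<and> length (snd s) \<le> m}"
proof -
  have "{s :: cu2. length (fst s) \<le> n \<and> length (snd s) \<le> m} = {xs. length xs \<le> n} \<times> {ys. length ys \<le> m}"
    by auto
  then show ?thesis using finite_lists_length_le[of "UNIV :: bool set"] by simp
qed

lemma finite_cu_box: "finite (cu_box N)"
  by (rule finite_subset[OF _ finite_pairs_length_le[of "2 * N" "2 * N"]]) (auto simp: cu_box_def cu_level_def)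

lemma finite_cu_layer: "finite (cu_layer N)"
  by (rule finite_subset[OF _ finite_pairs_length_le[of "2 * N" "2 * N"]]) (auto simp: cu_layer_def)

lemma finite_cu_ancestors: "finite (cu_ancestors u)"
  by (rule finite_subset[OF _ finite_pairs_length_le[of "length (fst u)" "length (snd u)"]])
     (auto simp: cu_ancestors_def)

lemma cu_box_exhausts: "finite F \<Longrightarrow> \<exists>N. F \<subseteq> cu_box N"
proof -
  assume F: "finite F"
  define N where "N = Max ((\<lambda>s. length (fst s) + length (snd s)) ` F)"
  have "length (fst s) + length (snd s) \<le> N" if "s \<in> F" for s
    unfolding N_def using F that by (intro Max_ge) auto
  then show ?thesis by (fastforce simp: cu_box_def cu_level_def intro!: exI[of _ N])
qed

lemma cu_box_mono: "N \<le> N' \<Longrightarrow> cu_box N \<subseteq> cu_box N'"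
  by (auto simp: cu_box_def)

lemma l1pad_eq: "l1pad m s t = (if \<exists>g. length g = m \<and> t = (fst s @ g, snd s @ g) then 1 else 0)"
proof (cases "\<exists>g. length g = m \<and> t = (fst s @ g, snd s @ g)")
  case True
  then obtain g where g: "length g = m" "t = (fst s @ g, snd s @ g)" by blast
  have "l1pad m s t = (\<Sum>g'\<in>{g. length g = m}. if g' = g then 1 else 0)"
    unfolding l1pad_def by (rule sum.cong) (use g in \<open>auto simp: l1delta_def\<close>)
  also have "\<dots> = 1" using g finite_words_length_eq[of m] by simp
  finally show ?thesis using True by simp
next
  case False
  then show ?thesis unfolding l1pad_def by (auto simp: l1delta_def intro!: sum.neutral)
qed

lemma cu_box_pad_to_layer:
  "{s \<in> cu_box N. \<exists>g. length g = N - cu_level s \<and> t = (fst s @ g, snd s @ g)}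
     = (if t \<in> cu_layer N then cu_ancestors t else {})"
proof -
  have "s \<in> cu_box N \<and> (\<exists>g. length g = N - cu_level s \<and> t = (fst s @ g, snd s @ g))
      \<longleftrightarrow> t \<in> cu_layer N \<and> s \<in> cu_ancestors t" for s
  proof
    assume "s \<in> cu_box N \<and> (\<exists>g. length g = N - cu_level s \<and> t = (fst s @ g, snd s @ g))"
    then show "t \<in> cu_layer N \<and> s \<in> cu_ancestors t"
      by (cases s) (auto simp: cu_box_def cu_layer_def cu_ancestors_def cu_level_def min_def)
  next
    assume "t \<in> cu_layer N \<and> s \<in> cu_ancestors t"
    then obtain g where t: "t \<in> cu_layer N" "fst t = fst s @ g" "snd t = snd s @ g"
      by (auto simp: cu_ancestors_def)
    then have "cu_level t = cu_level s + length g" by (simp add: cu_level_def)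
    with t show "s \<in> cu_box N \<and> (\<exists>g. length g = N - cu_level s \<and> t = (fst s @ g, snd s @ g))"
      by (auto simp: cu_box_def cu_layer_def prod_eq_iff)
  qed
  then show ?thesis by auto
qed

lemma restrict_minus_pushdown_eq:
  "(\<lambda>t. (if t \<in> cu_box N then a t else 0) - pushdown a N t)
     = (\<lambda>t. \<Sum>s\<in>cu_box N. a s * (l1delta s t - l1pad (N - cu_level s) s t))"
proof
  fix t
  have "(\<Sum>s\<in>cu_box N. a s * l1delta s t) = (if t \<in> cu_box N then a t else 0)"
    by (simp add: l1delta_def finite_cu_box if_distrib cong: if_cong)
  moreover have "(\<Sum>s\<in>cu_box N. a s * l1pad (N - cu_level s) s t)
      = (\<Sum>s\<in>{s \<in> cu_box N. \<exists>g. length g = N - cu_level s \<and> t = (fst s @ g, snd s @ g)}. a s)"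
    by (simp add: l1pad_eq sum.inter_filter[OF finite_cu_box, symmetric] if_distrib cong: if_cong)
  moreover have "\<dots> = pushdown a N t"
    by (simp add: cu_box_pad_to_layer pushdown_def)
  ultimately show "(if t \<in> cu_box N then a t else 0) - pushdown a N t
      = (\<Sum>s\<in>cu_box N. a s * (l1delta s t - l1pad (N - cu_level s) s t))"
    by (simp add: right_diff_distrib sum_subtractf)
qed

lemma restrict_minus_pushdown_in_J: "(\<lambda>t. (if t \<in> cu_box N then a t else 0) - pushdown a N t) \<in> J"
  unfolding restrict_minus_pushdown_eq
  by (intro J_sum finite_cu_box J_mult_const l1delta_minus_l1pad_in_J)

section \<open>Marker words\<close>

definition marker :: "nat \<Rightarrow> bool list" where
  "marker k = replicate k False @ [True]"

lemma length_marker [simp]: "length (marker k) = Suc k"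
  by (simp add: marker_def)

lemma append_marker_eq_append_marker_append:
  assumes eq: "y @ marker l = x @ marker k @ h" and le: "length y \<le> length x + k"
  shows "h = []"
proof (rule ccontr)
  assume "h \<noteq> []"
  moreover have "length y + l = length x + k + length h"
    using arg_cong[OF eq, of length] by simp
  ultimately have "length x + k < length y + l" by (cases h) auto
  then have "(y @ marker l) ! (length x + k) = False"
    using le by (simp add: marker_def nth_append)
  moreover have "(x @ marker k @ h) ! (length x + k) = True"
    by (simp add: marker_def nth_append)
  ultimately show False using eq by simp
qed

lemma drop_append_marker:
  assumes "length \<alpha> \<le> length \<mu> + k"
  shows "\<exists>x j. drop (length \<alpha>) (\<mu> @ marker k) = x @ marker j \<and> length x \<le> length \<mu> \<and> k \<le> length x + j + length \<alpha>"
proof (cases "length \<alpha> \<le> length \<mu>")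
  case True
  then show ?thesis by (intro exI[of _ "drop (length \<alpha>) \<mu>"] exI[of _ k]) auto
next
  case False
  with assms show ?thesis
    by (intro exI[of _ "[]"] exI[of _ "k - (length \<alpha> - length \<mu>)"]) (auto simp: marker_def)
qed

text \<open>The sandwich that picks out the coefficient of (mu w, nu w), w = marker M, sends every
  short element either to the unit or to zero: a marker cannot overlap another one.\<close>

lemma cu_mult3_marker_eq_unit:
  assumes v: "cu_mult3 ([], \<mu> @ marker M) (\<alpha>, \<beta>) (\<nu> @ marker M, []) = Some v"
    and short: "length \<alpha> + length \<nu> \<le> M" "length \<beta> + length \<mu> \<le> M"
  shows "v = cu_e"
proof -
  obtain r where r1: "cu_mult ([], \<mu> @ marker M) (\<alpha>, \<beta>) = Some r"
    and r2: "cu_mult r (\<nu> @ marker M, []) = Some v"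
    using v unfolding cu_mult3_def cu_mult0_left_eq_Some_iff by blast
  from r1 obtain g where P: "\<mu> @ marker M = \<alpha> @ g" and r: "r = ([], \<beta> @ g)"
    unfolding cu_mult_Some_iff using short by (auto dest: arg_cong[where f=length])
  have "g = drop (length \<alpha>) (\<mu> @ marker M)" using P by simp
  then obtain x j where g: "g = x @ marker j" "length x \<le> length \<mu>" "M \<le> length x + j + length \<alpha>"
    using drop_append_marker[of \<alpha> \<mu> M] short by auto
  from r2[unfolded r cu_mult_Some_iff]
  consider h where "\<nu> @ marker M = (\<beta> @ x) @ marker j @ h" "v = (h, [])"
    | h where "(\<beta> @ x) @ marker j = \<nu> @ marker M @ h" "v = ([], h)"
    using g(1) by auto
  then show ?thesis
  proof cases
    case 1
    have "h = []"
      by (rule append_marker_eq_append_marker_append[of \<nu> M "\<beta> @ x" j h]) (use 1 g short in auto)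
    then show ?thesis using 1 by (simp add: cu_e_def)
  next
    case 2
    have "h = []"
      by (rule append_marker_eq_append_marker_append[of "\<beta> @ x" j \<nu> M h]) (use 2 g short in auto)
    then show ?thesis using 2 by (simp add: cu_e_def)
  qed
qed

lemma cu_mult3_eq_unit_iff: "cu_mult3 ([], P) s (Q, []) = Some cu_e \<longleftrightarrow> s \<in> cu_ancestors (P, Q)"
proof -
  obtain \<alpha> \<beta> where s: "s = (\<alpha>, \<beta>)" by fastforce
  show ?thesis
    unfolding cu_mult3_def cu_mult0_left_eq_Some_iff s
    by (simp add: cu_e_def cu_ancestors_def) (auto simp: cu_mult_Some_iff)
qed

lemma cu_ancestors_append:
  "cu_ancestors u = {s \<in> cu_ancestors (fst u @ w, snd u @ w). cu_level s \<le> cu_level u}"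
proof (intro equalityI subsetI)
  fix s assume "s \<in> cu_ancestors u"
  then show "s \<in> {s \<in> cu_ancestors (fst u @ w, snd u @ w). cu_level s \<le> cu_level u}"
    by (auto simp: cu_ancestors_def cu_level_def)
next
  fix s assume "s \<in> {s \<in> cu_ancestors (fst u @ w, snd u @ w). cu_level s \<le> cu_level u}"
  then obtain g where g: "fst u @ w = fst s @ g" "snd u @ w = snd s @ g" and level: "cu_level s \<le> cu_level u"
    by (auto simp: cu_ancestors_def)
  have "length (fst u) + length w = length (fst s) + length g" "length (snd u) + length w = length (snd s) + length g"
    using arg_cong[OF g(1), of length] arg_cong[OF g(2), of length] by simp_all
  then have "length w \<le> length g" using level by (auto simp: cu_level_def)
  then obtain g' where "g = g' @ w"
    using g(1) by (auto simp: append_eq_append_conv2)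
  then show "s \<in> cu_ancestors u" using g by (auto simp: cu_ancestors_def)
qed

lemma cu_ancestors_append_level_gt:
  assumes s: "s \<in> cu_ancestors (fst u @ w, snd u @ w)" and level: "cu_level u < cu_level s"
  shows "length (fst u) + cu_level s = length (fst s) + cu_level u \<and> fst u = take (length (fst u)) (fst s)
       \<and> length (snd u) + cu_level s = length (snd s) + cu_level u \<and> snd u = take (length (snd u)) (snd s)"
proof -
  obtain g where g: "fst u @ w = fst s @ g" "snd u @ w = snd s @ g" using s by (auto simp: cu_ancestors_def)
  have l: "length (fst u) + length w = length (fst s) + length g" "length (snd u) + length w = length (snd s) + length g"
    using arg_cong[OF g(1), of length] arg_cong[OF g(2), of length] by simp_all
  then have "length (fst u) + cu_level s = length (fst s) + cu_level u"
    "length (snd u) + cu_level s = length (snd s) + cu_level u"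
    using level by (auto simp: cu_level_def)
  moreover have "length (fst u) \<le> length (fst s)" "length (snd u) \<le> length (snd s)"
    using calculation level by linarith+
  ultimately show ?thesis
    using arg_cong[OF g(1), of "take (length (fst u))"] arg_cong[OF g(2), of "take (length (snd u))"] by simp
qed

lemma cu_ancestors_append_disjoint:
  assumes "s \<in> cu_ancestors (fst u @ w, snd u @ w)" "s \<in> cu_ancestors (fst u' @ w, snd u' @ w)"
    and "cu_level u = cu_level u'" "cu_level u < cu_level s"
  shows "u = u'"
proof -
  note u = cu_ancestors_append_level_gt[OF assms(1,4)]
  note u' = cu_ancestors_append_level_gt[OF assms(2)] assms(3,4)
  have "length (fst u) = length (fst u')" "length (snd u) = length (snd u')"
    using u u' by simp_all
  then show ?thesis using u u' by (metis prod_eq_iff)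
qed

section \<open>Elements without a dominant sandwich lie in J\<close>

lemma norm_sum_marked_ancestors_le:
  assumes a: "a \<in> l1A"
    and not_dominant: "\<not> dominant_sandwich a ([], fst u @ marker M) (snd u @ marker M, [])"
    and M: "2 * L + length (fst u) \<le> M" "2 * L + length (snd u) \<le> M"
  shows "norm (\<Sum>s\<in>cu_ancestors (fst u @ marker M, snd u @ marker M). a s) \<le> (\<Sum>\<^sub>\<infinity>s\<in>-cu_box L. norm (a s))"
proof -
  define B where "B = (([] :: bool list), fst u @ marker M)"
  define C where "C = (snd u @ marker M, ([] :: bool list))"
  have units: "{s. cu_mult3 B s C = Some cu_e} = cu_ancestors (fst u @ marker M, snd u @ marker M)"
    by (simp add: B_def C_def cu_mult3_eq_unit_iff)
  have others: "{s. \<exists>v\<in>-{cu_e}. cu_mult3 B s C = Some v} \<subseteq> -cu_box L"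
  proof
    fix s assume "s \<in> {s. \<exists>v\<in>-{cu_e}. cu_mult3 B s C = Some v}"
    then obtain v where v: "v \<noteq> cu_e" "cu_mult3 B s C = Some v" by auto
    show "s \<in> -cu_box L"
    proof
      assume "s \<in> cu_box L"
      then have "length (fst s) \<le> 2 * L" "length (snd s) \<le> 2 * L"
        by (auto simp: cu_box_def cu_level_def)
      then have "v = cu_e"
        using cu_mult3_marker_eq_unit[of "fst u" M "fst s" "snd s" "snd u" v] v(2) M
        by (simp add: B_def C_def)
      with v(1) show False ..
    qed
  qed
  have "norm (\<Sum>\<^sub>\<infinity>s\<in>{s. cu_mult3 B s C = Some cu_e}. a s)
      \<le> (\<Sum>\<^sub>\<infinity>s\<in>{s. \<exists>v\<in>-{cu_e}. cu_mult3 B s C = Some v}. norm (a s))"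
    using not_dominant unfolding dominant_sandwich_def B_def C_def by simp
  then have "norm (\<Sum>s\<in>cu_ancestors (fst u @ marker M, snd u @ marker M). a s)
      \<le> (\<Sum>\<^sub>\<infinity>s\<in>{s. \<exists>v\<in>-{cu_e}. cu_mult3 B s C = Some v}. norm (a s))"
    unfolding units using finite_cu_ancestors by simp
  also have "\<dots> \<le> (\<Sum>\<^sub>\<infinity>s\<in>-cu_box L. norm (a s))"
    using others by (intro infsum_mono_neutral l1A_norm_summable[OF a]) auto
  finally show ?thesis .
qed

definition long_marked_ancestors :: "nat \<Rightarrow> cu2 \<Rightarrow> cu2 set" where
  "long_marked_ancestors M u = {s \<in> cu_ancestors (fst u @ marker M, snd u @ marker M). cu_level u < cu_level s}"

lemma finite_long_marked_ancestors: "finite (long_marked_ancestors M u)"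
  unfolding long_marked_ancestors_def using finite_cu_ancestors by simp

lemma long_marked_ancestors_disjoint:
  "cu_level u = cu_level u' \<Longrightarrow> u \<noteq> u' \<Longrightarrow> long_marked_ancestors M u \<inter> long_marked_ancestors M u' = {}"
  by (fastforce simp: long_marked_ancestors_def dest: cu_ancestors_append_disjoint)

lemma norm_sum_cu_ancestors_le:
  assumes a: "a \<in> l1A"
    and not_dominant: "\<not> dominant_sandwich a ([], fst u @ marker M) (snd u @ marker M, [])"
    and M: "2 * L + length (fst u) \<le> M" "2 * L + length (snd u) \<le> M"
  shows "norm (\<Sum>s\<in>cu_ancestors u. a s)
    \<le> (\<Sum>\<^sub>\<infinity>s\<in>-cu_box L. norm (a s)) + (\<Sum>s\<in>long_marked_ancestors M u. norm (a s))"
proof -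
  define marked where "marked = cu_ancestors (fst u @ marker M, snd u @ marker M)"
  define long where "long = long_marked_ancestors M u"
  have ancestors: "cu_ancestors u = {s \<in> marked. cu_level s \<le> cu_level u}"
    using cu_ancestors_append[of u "marker M"] by (simp add: marked_def)
  have marked_eq: "marked = cu_ancestors u \<union> long"
    unfolding ancestors long_def long_marked_ancestors_def marked_def[symmetric] by auto
  have disjoint: "cu_ancestors u \<inter> long = {}"
    unfolding ancestors long_def long_marked_ancestors_def marked_def[symmetric] by auto
  have "(\<Sum>s\<in>marked. a s) = (\<Sum>s\<in>cu_ancestors u. a s) + (\<Sum>s\<in>long. a s)"
    unfolding marked_eq long_def
    by (rule sum.union_disjoint[OF finite_cu_ancestors finite_long_marked_ancestors disjoint[unfolded long_def]])
  moreover have "norm (\<Sum>s\<in>marked. a s) \<le> (\<Sum>\<^sub>\<infinity>s\<in>-cu_box L. norm (a s))"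
    unfolding marked_def by (rule norm_sum_marked_ancestors_le[OF a not_dominant M])
  moreover have "norm (\<Sum>s\<in>long. a s) \<le> (\<Sum>s\<in>long. norm (a s))"
    by (rule norm_sum)
  ultimately show ?thesis
    using norm_triangle_ineq4[of "\<Sum>s\<in>marked. a s" "\<Sum>s\<in>long. a s"] by (simp add: long_def)
qed

lemma l1norm_pushdown_le:
  assumes a: "a \<in> l1A" and not_dominant: "\<And>B C. \<not> dominant_sandwich a B C"
  shows "l1norm (pushdown a N) \<le> (\<Sum>\<^sub>\<infinity>s\<in>-cu_box N. norm (a s))"
proof (rule field_le_epsilon)
  fix e :: real assume e: "e > 0"
  define tail where "tail L = (\<Sum>\<^sub>\<infinity>s\<in>-cu_box L. norm (a s))" for L
  define c where "c = real (card (cu_layer N))"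
  have "tail \<longlonglongrightarrow> 0"
    unfolding tail_def using a cu_box_exhausts cu_box_mono
    by (intro tendsto_infsum_Compl_zero) (auto simp: l1A_def)
  moreover have "e / (c + 1) > 0" using e by (simp add: c_def)
  ultimately obtain L where "\<bar>tail L\<bar> < e / (c + 1)"
    using LIMSEQ_D by fastforce
  then have L: "tail L < e / (c + 1)" by simp
  have "tail L \<ge> 0" unfolding tail_def by (rule infsum_nonneg) simp
  then have "c * tail L \<le> (c + 1) * tail L" by (simp add: distrib_right)
  also have "\<dots> < e" using L by (simp add: c_def pos_less_divide_eq mult.commute)
  finally have c_tail: "c * tail L \<le> e" by simp
  define long where "long = long_marked_ancestors (2 * L + 2 * N)"
  have "l1norm (pushdown a N) = (\<Sum>\<^sub>\<infinity>u\<in>cu_layer N. norm (pushdown a N u))"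
    unfolding l1norm_def by (rule infsum_cong_neutral) (auto simp: pushdown_def)
  also have "\<dots> = (\<Sum>u\<in>cu_layer N. norm (\<Sum>s\<in>cu_ancestors u. a s))"
    by (simp add: finite_cu_layer pushdown_def)
  also have "\<dots> \<le> (\<Sum>u\<in>cu_layer N. tail L + (\<Sum>s\<in>long u. norm (a s)))"
    unfolding tail_def long_def using not_dominant
    by (intro sum_mono norm_sum_cu_ancestors_le[OF a]) (auto simp: cu_layer_def)
  also have "\<dots> = c * tail L + (\<Sum>s\<in>(\<Union>u\<in>cu_layer N. long u). norm (a s))"
    unfolding long_def
    by (simp add: sum.distrib c_def, rule sum.UNION_disjoint[symmetric])
       (use finite_cu_layer in \<open>auto simp: finite_long_marked_ancestors long_marked_ancestors_disjoint cu_layer_def\<close>)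
  also have "(\<Sum>s\<in>(\<Union>u\<in>cu_layer N. long u). norm (a s)) \<le> (\<Sum>\<^sub>\<infinity>s\<in>-cu_box N. norm (a s))"
    using finite_cu_layer finite_long_marked_ancestors
    by (intro finite_sum_le_infsum l1A_norm_summable[OF a])
       (auto simp: long_def long_marked_ancestors_def cu_box_def cu_layer_def)
  finally show "l1norm (pushdown a N) \<le> (\<Sum>\<^sub>\<infinity>s\<in>-cu_box N. norm (a s)) + e"
    using c_tail by simp
qed

lemma pushdown_in_l1A: "pushdown a N \<in> l1A"
  by (rule l1A_finite_support[of "cu_layer N"]) (simp_all add: pushdown_def finite_cu_layer)

lemma l1norm_restrict_diff_le:
  assumes a: "a \<in> l1A" and not_dominant: "\<And>B C. \<not> dominant_sandwich a B C"
  shows "l1norm (\<lambda>t. ((if t \<in> cu_box N then a t else 0) - pushdown a N t) - a t)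
      \<le> 2 * (\<Sum>\<^sub>\<infinity>s\<in>-cu_box N. norm (a s))"
proof -
  define outside where "outside s = (if s \<in> cu_box N then 0 else norm (a s))" for s
  have "(\<lambda>s. norm (a s)) summable_on -cu_box N" by (rule l1A_norm_summable[OF a])
  then have "outside summable_on UNIV"
    by (rule summable_on_cong_neutral[THEN iffD1, rotated -1]) (auto simp: outside_def)
  moreover have "(\<lambda>s. norm (pushdown a N s)) summable_on UNIV"
    using pushdown_in_l1A by (simp add: l1A_def)
  ultimately have sums: "(\<lambda>s. outside s + norm (pushdown a N s)) summable_on UNIV"
    by (rule summable_on_add)
  have pointwise: "norm (((if t \<in> cu_box N then a t else 0) - pushdown a N t) - a t)
      \<le> outside t + norm (pushdown a N t)" for t
    by (auto simp: outside_def norm_minus_commute norm_triangle_ineq)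
  have outside_sum: "(\<Sum>\<^sub>\<infinity>s. outside s) = (\<Sum>\<^sub>\<infinity>s\<in>-cu_box N. norm (a s))"
    by (rule infsum_cong_neutral) (auto simp: outside_def)
  have "l1norm (\<lambda>t. ((if t \<in> cu_box N then a t else 0) - pushdown a N t) - a t)
      \<le> (\<Sum>\<^sub>\<infinity>s. outside s + norm (pushdown a N s))"
    unfolding l1norm_def
    by (intro infsum_mono sums pointwise Infinite_Sum.abs_summable_on_comparison_test'[OF sums])
  also have "\<dots> = (\<Sum>\<^sub>\<infinity>s\<in>-cu_box N. norm (a s)) + l1norm (pushdown a N)"
    using \<open>outside summable_on UNIV\<close> \<open>(\<lambda>s. norm (pushdown a N s)) summable_on UNIV\<close>
    by (simp add: infsum_add l1norm_def outside_sum)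
  also have "\<dots> \<le> 2 * (\<Sum>\<^sub>\<infinity>s\<in>-cu_box N. norm (a s))"
    using l1norm_pushdown_le[OF a not_dominant, of N] by (simp add: infsum_nonneg)
  finally show ?thesis .
qed

text \<open>Modulo J the restriction of a to cu_box N equals pushdown a N, whose norm is bounded
  by the tail of a when no sandwich of a is dominant; so a is a limit of elements of J.\<close>

lemma not_dominant_sandwich_imp_in_J:
  assumes a: "a \<in> l1A" and not_dominant: "\<And>B C. \<not> dominant_sandwich a B C"
  shows "a \<in> J"
proof -
  define x where "x N = (\<lambda>t. (if t \<in> cu_box N then a t else 0) - pushdown a N t)" for N
  define tail where "tail N = (\<Sum>\<^sub>\<infinity>s\<in>-cu_box N. norm (a s))" for N
  have "tail \<longlonglongrightarrow> 0"
    unfolding tail_def using a cu_box_exhausts cu_box_mono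
    by (intro tendsto_infsum_Compl_zero) (auto simp: l1A_def)
  then have upper_lim: "(\<lambda>N. 2 * tail N) \<longlonglongrightarrow> 0"
    using tendsto_mult_right_zero[of tail sequentially 2] by (simp add: mult.commute)
  have upper: "\<forall>\<^sub>F N in sequentially. l1norm (\<lambda>t. x N t - a t) \<le> 2 * tail N"
    using l1norm_restrict_diff_le[OF a not_dominant] by (simp add: x_def tail_def)
  have lower: "\<forall>\<^sub>F N in sequentially. 0 \<le> l1norm (\<lambda>t. x N t - a t)"
    by (simp add: l1norm_nonneg)
  have "(\<forall>N. x N \<in> J) \<and> a \<in> l1A \<and> (\<lambda>N. l1norm (\<lambda>t. x N t - a t)) \<longlonglongrightarrow> 0"
    using restrict_minus_pushdown_in_J a tendsto_sandwich[OF lower upper tendsto_const upper_lim]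
    by (simp add: x_def)
  then show ?thesis
    using l1_closed_J[unfolded l1_closed_def, rule_format] by blast
qed

section \<open>Weight functionals vanishing on J\<close>

text \<open>The weight 2^(-|mu|) on the projections s_mu s_mu^* is additive over the relation
  s_mu s_mu^* = s_mu1 s_mu1^* + s_mu2 s_mu2^*. Composed with left and right multiplication it gives
  bounded functionals that vanish on f_0, hence on J; they detect non-membership in J.\<close>

definition diag_weight :: "cu2 option \<Rightarrow> complex" where
  "diag_weight x = (case x of None \<Rightarrow> 0 | Some (\<mu>, \<nu>) \<Rightarrow> if \<mu> = \<nu> then (1/2) ^ length \<mu> else 0)"

definition weight_functional :: "cu2 option \<Rightarrow> cu2 option \<Rightarrow> (cu2 \<Rightarrow> complex) \<Rightarrow> complex" where
  "weight_functional x y f = (\<Sum>\<^sub>\<infinity>s. f s * diag_weight (cu_mult0 (cu_mult0 x (Some s)) y))"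

definition weight_kernel :: "(cu2 \<Rightarrow> complex) set" where
  "weight_kernel = {f \<in> l1A. \<forall>x y. weight_functional x y f = 0}"

lemma norm_diag_weight_le: "norm (diag_weight x) \<le> 1"
  by (auto simp: diag_weight_def norm_power power_le_one split: option.splits)

lemma norm_mult_diag_weight_le: "norm (c * diag_weight x) \<le> norm c"
  using norm_diag_weight_le[of x] mult_left_le[of _ "norm c"] by (simp add: norm_mult)

lemma summable_on_weight_functional:
  "f \<in> l1A \<Longrightarrow> (\<lambda>s. f s * diag_weight (cu_mult0 (cu_mult0 x (Some s)) y)) summable_on A"
  by (rule abs_summable_summable,
      rule Infinite_Sum.abs_summable_on_comparison_test'[OF l1A_norm_summable norm_mult_diag_weight_le])

lemma norm_weight_functional_le: "f \<in> l1A \<Longrightarrow> norm (weight_functional x y f) \<le> l1norm f"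
  unfolding weight_functional_def l1norm_def
  by (rule norm_infsum_bound[THEN order_trans],
      simp add: summable_on_weight_functional summable_on_iff_abs_summable_on_complex[symmetric])
     (intro infsum_mono norm_mult_diag_weight_le l1A_norm_summable
        summable_on_weight_functional[simplified summable_on_iff_abs_summable_on_complex])

lemma weight_functional_add:
  "f \<in> l1A \<Longrightarrow> g \<in> l1A \<Longrightarrow> weight_functional x y (\<lambda>s. f s + g s) = weight_functional x y f + weight_functional x y g"
  unfolding weight_functional_def distrib_right
  by (rule infsum_add) (simp_all add: summable_on_weight_functional)

lemma weight_functional_mult_const: "weight_functional x y (\<lambda>s. c * f s) = c * weight_functional x y f"
  unfolding weight_functional_def by (simp add: infsum_cmult_right' mult.assoc)

lemma weight_functional_diff:
  "f \<in> l1A \<Longrightarrow> g \<in> l1A \<Longrightarrow> weight_functional x y (\<lambda>s. f s - g s) = weight_functional x y f - weight_functional x y g"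
  using weight_functional_add[of f "\<lambda>s. (-1) * g s"] weight_functional_mult_const[of x y "-1" g]
    l1A_mult_const[of g "-1"] by simp

lemma weight_functional_sum:
  "finite I \<Longrightarrow> (\<And>i. i \<in> I \<Longrightarrow> F i \<in> l1A) \<Longrightarrow>
     weight_functional x y (\<lambda>t. \<Sum>i\<in>I. F i t) = (\<Sum>i\<in>I. weight_functional x y (F i))"
proof (induction I rule: finite_induct)
  case empty
  then show ?case by (simp add: weight_functional_def)
next
  case (insert j I)
  then show ?case by (simp add: weight_functional_add l1A_sum)
qed

lemma weight_functional_l1delta:
  "weight_functional x y (l1delta s) = diag_weight (cu_mult0 (cu_mult0 x (Some s)) y)"
proof -
  have "weight_functional x y (l1delta s) = (\<Sum>\<^sub>\<infinity>t\<in>{s}. l1delta s t * diag_weight (cu_mult0 (cu_mult0 x (Some t)) y))"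
    unfolding weight_functional_def by (rule infsum_cong_neutral) (auto simp: l1delta_def)
  then show ?thesis by (simp add: l1delta_def)
qed

lemma diag_weight_split:
  "diag_weight (cu_mult0 (cu_mult0 x (Some cu_e)) y)
     = diag_weight (cu_mult0 (cu_mult0 x (Some ([False], [False]))) y)
       + diag_weight (cu_mult0 (cu_mult0 x (Some ([True], [True]))) y)"
proof (cases x; cases y)
  fix s t assume x: "x = Some s" and y: "y = Some t"
  obtain \<mu> \<nu> where s: "s = (\<mu>, \<nu>)" by fastforce
  obtain \<alpha> \<beta> where t: "t = (\<alpha>, \<beta>)" by fastforce
  show ?thesis
  proof (cases \<nu>)
    case (Cons b \<nu>')
    then show ?thesis using x y s t by (cases b) (auto simp: cu_mult_def cu_e_def take_Cons' diag_weight_def)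
  next
    case Nil
    then show ?thesis using x y s t
      by (cases \<alpha>; cases "hd \<alpha>") (auto simp: cu_mult_def cu_e_def take_Cons' diag_weight_def)
  qed
qed (auto simp: diag_weight_def)

lemma f0_in_weight_kernel: "f0 \<in> weight_kernel"
  using f0_in_l1A
  by (simp add: weight_kernel_def f0_def l1unit_def weight_functional_diff l1A_diff l1delta_in_l1A
      weight_functional_l1delta diag_weight_split)

lemma weight_functional_l1conv:
  assumes g: "g \<in> l1A" and f: "f \<in> l1A"
  shows "weight_functional x y (g #\<^sub>\<ell> f)
    = (\<Sum>\<^sub>\<infinity>p. g (fst p) * f (snd p) * diag_weight (cu_mult0 (cu_mult0 (cu_mult0 x (Some (fst p))) (Some (snd p))) y))"
proof -
  define h where "h p = g (fst p) * f (snd p)" for p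
  have h: "(\<lambda>p. norm (h p)) summable_on UNIV"
    unfolding h_def by (rule abs_summable_on_l1_product[OF g f])
  have assoc: "cu_mult0 (cu_mult0 x (Some (fst p))) (Some (snd p)) = cu_mult0 x (cu_mult (fst p) (snd p))" for p
    using cu_mult0_assoc[of x "Some (fst p)" "Some (snd p)"] by simp
  have "weight_functional x y (g #\<^sub>\<ell> f)
      = (\<Sum>\<^sub>\<infinity>u. diag_weight (cu_mult0 (cu_mult0 x (Some u)) y) * (\<Sum>\<^sub>\<infinity>p\<in>{p. cu_mult (fst p) (snd p) = Some u}. h p))"
    unfolding weight_functional_def by (simp add: l1conv_def h_def mult.commute)
  also have "\<dots> = (\<Sum>\<^sub>\<infinity>p\<in>{p. \<exists>u\<in>UNIV. cu_mult (fst p) (snd p) = Some u}.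
      diag_weight (cu_mult0 (cu_mult0 x (Some (the (cu_mult (fst p) (snd p))))) y) * h p)"
    by (rule infsum_weighted_fibers[OF h, where B=1]) (rule norm_diag_weight_le)
  also have "\<dots> = (\<Sum>\<^sub>\<infinity>p. g (fst p) * f (snd p) * diag_weight (cu_mult0 (cu_mult0 (cu_mult0 x (Some (fst p))) (Some (snd p))) y))"
  proof (rule infsum_cong_neutral)
    fix p assume "p \<in> UNIV - {p. \<exists>u\<in>UNIV. cu_mult (fst p) (snd p) = Some u}"
    then have "cu_mult (fst p) (snd p) = None" by (cases "cu_mult (fst p) (snd p)") auto
    then show "g (fst p) * f (snd p) * diag_weight (cu_mult0 (cu_mult0 (cu_mult0 x (Some (fst p))) (Some (snd p))) y) = 0"
      by (simp add: assoc diag_weight_def)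
  qed (auto simp: assoc h_def)
  finally show ?thesis .
qed

lemma summable_on_weight_functional_l1conv:
  assumes "g \<in> l1A" "f \<in> l1A"
  shows "(\<lambda>(p1, p2). g p1 * f p2 * diag_weight (K p1 p2)) summable_on UNIV \<times> UNIV"
proof -
  have "(\<lambda>p. norm (g (fst p) * f (snd p) * diag_weight (K (fst p) (snd p)))) summable_on UNIV"
    by (rule Infinite_Sum.abs_summable_on_comparison_test'[OF abs_summable_on_l1_product[OF assms]])
       (rule norm_mult_diag_weight_le)
  then show ?thesis by (simp add: case_prod_unfold abs_summable_summable)
qed

lemma weight_functional_l1conv_left:
  assumes a: "a \<in> l1A" and f: "f \<in> l1A"
  shows "weight_functional x y (a #\<^sub>\<ell> f) = (\<Sum>\<^sub>\<infinity>p. a p * weight_functional (cu_mult0 x (Some p)) y f)"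
proof -
  have "weight_functional x y (a #\<^sub>\<ell> f)
      = (\<Sum>\<^sub>\<infinity>(p1, p2)\<in>UNIV \<times> UNIV. a p1 * f p2 * diag_weight (cu_mult0 (cu_mult0 (cu_mult0 x (Some p1)) (Some p2)) y))"
    by (simp add: weight_functional_l1conv[OF a f] case_prod_unfold)
  also have "\<dots> = (\<Sum>\<^sub>\<infinity>p1. \<Sum>\<^sub>\<infinity>p2. a p1 * f p2 * diag_weight (cu_mult0 (cu_mult0 (cu_mult0 x (Some p1)) (Some p2)) y))"
    using infsum_Sigma'_banach[OF summable_on_weight_functional_l1conv[OF a f]] by simp
  also have "\<dots> = (\<Sum>\<^sub>\<infinity>p. a p * weight_functional (cu_mult0 x (Some p)) y f)"
    unfolding weight_functional_def by (rule infsum_cong) (simp add: infsum_cmult_right' mult.assoc)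
  finally show ?thesis .
qed

lemma weight_functional_l1conv_right:
  assumes a: "a \<in> l1A" and f: "f \<in> l1A"
  shows "weight_functional x y (f #\<^sub>\<ell> a) = (\<Sum>\<^sub>\<infinity>p. a p * weight_functional x (cu_mult0 (Some p) y) f)"
proof -
  note S = summable_on_weight_functional_l1conv[OF f a]
  have "weight_functional x y (f #\<^sub>\<ell> a)
      = (\<Sum>\<^sub>\<infinity>(p1, p2)\<in>UNIV \<times> UNIV. f p1 * a p2 * diag_weight (cu_mult0 (cu_mult0 (cu_mult0 x (Some p1)) (Some p2)) y))"
    by (simp add: weight_functional_l1conv[OF f a] case_prod_unfold)
  also have "\<dots> = (\<Sum>\<^sub>\<infinity>p2. \<Sum>\<^sub>\<infinity>p1. f p1 * a p2 * diag_weight (cu_mult0 (cu_mult0 (cu_mult0 x (Some p1)) (Some p2)) y))"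
    using infsum_Sigma'_banach[OF S] infsum_swap_banach[OF S] by simp
  also have "\<dots> = (\<Sum>\<^sub>\<infinity>p. a p * weight_functional x (cu_mult0 (Some p) y) f)"
    unfolding weight_functional_def cu_mult0_assoc
    by (rule infsum_cong) (simp add: infsum_cmult_right'[symmetric] ac_simps)
  finally show ?thesis .
qed

lemma weight_functional_zero: "weight_functional x y (\<lambda>s. 0) = 0"
  by (simp add: weight_functional_def)

lemma weight_kernel_l1conv:
  assumes a: "a \<in> l1A" and f: "f \<in> weight_kernel"
  shows "a #\<^sub>\<ell> f \<in> weight_kernel" and "f #\<^sub>\<ell> a \<in> weight_kernel"
proof -
  have "f \<in> l1A" and "\<And>x y. weight_functional x y f = 0" using f by (auto simp: weight_kernel_def)
  then show "a #\<^sub>\<ell> f \<in> weight_kernel" and "f #\<^sub>\<ell> a \<in> weight_kernel"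
    using a by (simp_all add: weight_kernel_def l1conv_in_l1A weight_functional_l1conv_left[OF a]
        weight_functional_l1conv_right[OF a])
qed

lemma l1_ideal_weight_kernel: "l1_ideal weight_kernel"
proof -
  have "weight_kernel \<subseteq> l1A" "(\<lambda>s. 0) \<in> weight_kernel"
    "\<forall>f\<in>weight_kernel. \<forall>g\<in>weight_kernel. (\<lambda>s. f s + g s) \<in> weight_kernel"
    "\<forall>c. \<forall>f\<in>weight_kernel. (\<lambda>s. c * f s) \<in> weight_kernel"
    by (auto simp: weight_kernel_def l1A_zero weight_functional_zero weight_functional_add l1A_add
        weight_functional_mult_const l1A_mult_const)
  then show ?thesis unfolding l1_ideal_def using weight_kernel_l1conv by blast
qed

lemma l1_closed_weight_kernel: "l1_closed weight_kernel"
  unfolding l1_closed_def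
proof (intro allI impI)
  fix X f assume H: "(\<forall>n. X n \<in> weight_kernel) \<and> f \<in> l1A \<and> (\<lambda>n. l1norm (\<lambda>s. X n s - f s)) \<longlonglongrightarrow> 0"
  then have X: "\<And>n. X n \<in> l1A" "\<And>n x y. weight_functional x y (X n) = 0" and f: "f \<in> l1A"
    by (auto simp: weight_kernel_def)
  have "weight_functional x y f = 0" for x y
  proof -
    have "norm (weight_functional x y f) \<le> l1norm (\<lambda>s. X n s - f s)" for n
    proof -
      have "weight_functional x y (\<lambda>s. X n s - f s) = - weight_functional x y f"
        using weight_functional_diff[OF X(1) f, of x y n] X(2)[of x y n] by simp
      then show ?thesis
        using norm_weight_functional_le[OF l1A_diff[OF X(1)[of n] f], of x y] by simp
    qed
    then have "norm (weight_functional x y f) \<le> 0"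
      using H by (intro LIMSEQ_le_const) auto
    then show ?thesis by simp
  qed
  then show "f \<in> weight_kernel" using f by (simp add: weight_kernel_def)
qed

lemma J_subset_weight_kernel: "J \<subseteq> weight_kernel"
  by (rule J_minimal[OF l1_ideal_weight_kernel l1_closed_weight_kernel f0_in_weight_kernel])

section \<open>The quotient A/J\<close>

interpretation fun_space: vector_space "\<lambda>(c::complex) (v::nat \<Rightarrow> complex). (\<lambda>m. c * v m)"
  by unfold_locales (auto simp: fun_eq_iff algebra_simps)

lemma sum_fun_apply: "(\<Sum>g\<in>F. (h g :: 'a \<Rightarrow> 'b::comm_monoid_add)) x = (\<Sum>g\<in>F. h g x)"
  by (induction F rule: infinite_finite_induct) auto

definition unit_vector :: "nat \<Rightarrow> nat \<Rightarrow> complex" where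
  "unit_vector n = (\<lambda>m. if m = n then 1 else 0)"

lemma fun_space_span_sum:
  assumes "\<And>m. v m = (\<Sum>g\<in>F. c g * V g m)"
  shows "v \<in> fun_space.span (V ` F)"
proof -
  have "v = (\<Sum>g\<in>F. (\<lambda>m. c g * V g m))" by (simp add: fun_eq_iff sum_fun_apply assms)
  also have "\<dots> \<in> fun_space.span (V ` F)"
    by (intro fun_space.span_sum fun_space.span_scale fun_space.span_base) auto
  finally show ?thesis .
qed

lemma independent_unit_vectors:
  assumes "finite A"
  shows "fun_space.independent (unit_vector ` A)"
proof
  assume "fun_space.dependent (unit_vector ` A)"
  then obtain u where u: "\<exists>v\<in>unit_vector ` A. u v \<noteq> 0" "(\<Sum>v\<in>unit_vector ` A. (\<lambda>m. u v * v m)) = 0"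
    using fun_space.dependent_finite[of "unit_vector ` A"] assms by blast
  have "u (unit_vector n) = 0" if n: "n \<in> A" for n
  proof -
    have "0 = (\<Sum>v\<in>unit_vector ` A. u v * v n)" using u(2) by (simp add: sum_fun_apply fun_eq_iff)
    also have "\<dots> = (\<Sum>v\<in>{unit_vector n}. u v * v n)"
      by (rule sum.mono_neutral_right) (use n assms in \<open>auto simp: unit_vector_def split: if_splits\<close>)
    also have "\<dots> = u (unit_vector n)" by (simp add: unit_vector_def)
    finally show ?thesis by simp
  qed
  with u(1) show False by blast
qed

lemma unit_vector_not_in_finite_span:
  assumes S: "finite S"
  shows "\<exists>n. unit_vector n \<notin> fun_space.span S"
proof (rule ccontr)
  assume "\<not> ?thesis"
  then have span: "unit_vector ` {..card S} \<subseteq> fun_space.span S" by auto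
  have "inj unit_vector" by (auto simp: inj_def unit_vector_def fun_eq_iff split: if_splits)
  then have "card (unit_vector ` {..card S}) = card S + 1"
    by (simp add: card_image inj_on_subset[of unit_vector UNIV])
  moreover have "card (unit_vector ` {..card S}) \<le> card S"
    using fun_space.independent_span_bound[OF S independent_unit_vectors span] by simp
  ultimately show False by simp
qed

lemma weight_functional_power_s1:
  "weight_functional (Some ([], replicate m False)) (Some cu_e) (l1delta (replicate n False, []))
     = (if m = n then 1 else 0)"
proof (cases "m \<le> n")
  case True
  then have "cu_mult ([], replicate m False) (replicate n False, []) = Some (replicate (n - m) False, [])"
    by (simp add: cu_mult_def min_def)
  then show ?thesis using True by (simp add: weight_functional_l1delta cu_mult_unit_right diag_weight_def)
next
  case False
  then have "cu_mult ([], replicate m False) (replicate n False, []) = Some ([], replicate (m - n) False)"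
    by (simp add: cu_mult_def min_def)
  then show ?thesis using False by (simp add: weight_functional_l1delta cu_mult_unit_right diag_weight_def)
qed

text \<open>The classes of the powers s_1^n are linearly independent: the functional that
  evaluates the weight of (s_1^*)^m f detects exactly the n = m term.\<close>

lemma not_quot_finite_dim: "\<not> quot_finite_dim"
proof
  assume "quot_finite_dim"
  then obtain F where F: "finite F" "F \<subseteq> l1A"
    and spans: "\<And>f. f \<in> l1A \<Longrightarrow> \<exists>c :: (cu2 \<Rightarrow> complex) \<Rightarrow> complex. (\<lambda>s. f s - (\<Sum>g\<in>F. c g * g s)) \<in> J"
    unfolding quot_finite_dim_def by blast
  define V where "V g m = weight_functional (Some ([], replicate m False)) (Some cu_e) g" for g m
  obtain n where n: "unit_vector n \<notin> fun_space.span (V ` F)"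
    using unit_vector_not_in_finite_span[OF finite_imageI[OF F(1)]] by blast
  obtain c where "(\<lambda>s. l1delta (replicate n False, []) s - (\<Sum>g\<in>F. c g * g s)) \<in> J"
    using spans[OF l1delta_in_l1A] by blast
  then have c: "weight_functional x y (\<lambda>s. l1delta (replicate n False, []) s - (\<Sum>g\<in>F. c g * g s)) = 0" for x y
    using J_subset_weight_kernel by (auto simp: weight_kernel_def)
  have combination: "(\<lambda>s. \<Sum>g\<in>F. c g * g s) \<in> l1A"
    using F by (intro l1A_sum l1A_mult_const) auto
  have "unit_vector n m = (\<Sum>g\<in>F. c g * V g m)" for m
    using c[of "Some ([], replicate m False)" "Some cu_e"] F
    by (simp add: weight_functional_diff[OF l1delta_in_l1A combination] weight_functional_power_s1
        weight_functional_sum l1A_mult_const subsetD weight_functional_mult_const V_def unit_vector_def)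
  then have "unit_vector n \<in> fun_space.span (V ` F)" by (rule fun_space_span_sum)
  with n show False ..
qed

text \<open>s_1 is not invertible modulo J: s_2^* s_1 = 0, while s_2^* s_2 = 1 is detected
  by a weight functional.\<close>

lemma not_quot_division_algebra: "\<not> quot_division_algebra"
proof
  assume division: quot_division_algebra
  define a where "a = l1delta ([False], [])"
  have a: "a \<in> l1A" by (simp add: a_def l1delta_in_l1A)
  have "weight_functional (Some ([], [False])) (Some cu_e) a = 1"
    by (simp add: a_def weight_functional_l1delta cu_mult_def cu_e_def diag_weight_def)
  then have "a \<notin> J" using J_subset_weight_kernel by (auto simp: weight_kernel_def)
  then obtain b where b: "b \<in> l1A" and inverse: "qdiff (a #\<^sub>\<ell> b) l1unit \<in> J"
    using division a unfolding quot_division_algebra_def by blast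
  have "(a #\<^sub>\<ell> b) u * diag_weight (cu_mult0 (cu_mult0 (Some ([], [True])) (Some u)) (Some ([True], []))) = 0" for u
  proof (cases "(a #\<^sub>\<ell> b) u = 0")
    case False
    have "{q. cu_mult ([False], []) q = Some u} \<noteq> {}"
    proof
      assume "{q. cu_mult ([False], []) q = Some u} = {}"
      then have "(a #\<^sub>\<ell> b) u = 0" by (simp only: a_def l1conv_l1delta_left infsum_empty)
      with False show False ..
    qed
    then obtain q where "cu_mult ([False], []) q = Some u" by blast
    then have "fst u \<noteq> [] \<and> hd (fst u) = False" by (cases q) (auto simp: cu_mult_def split: if_splits)
    then show ?thesis by (cases u; cases "fst u") (auto simp: cu_mult_def diag_weight_def)
  qed simp
  then have "weight_functional (Some ([], [True])) (Some ([True], [])) (a #\<^sub>\<ell> b) = 0"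
    unfolding weight_functional_def by (simp add: infsum_0)
  moreover have "weight_functional (Some ([], [True])) (Some ([True], [])) l1unit = 1"
    by (simp add: l1unit_def weight_functional_l1delta cu_mult_def cu_e_def diag_weight_def)
  ultimately have "weight_functional (Some ([], [True])) (Some ([True], [])) (qdiff (a #\<^sub>\<ell> b) l1unit) = -1"
    unfolding qdiff_def by (simp add: weight_functional_diff l1conv_in_l1A a b l1unit_in_l1A)
  moreover have "qdiff (a #\<^sub>\<ell> b) l1unit \<in> weight_kernel" using inverse J_subset_weight_kernel by blast
  ultimately show False by (simp add: weight_kernel_def)
qed

lemma quot_purely_infinite: "quot_purely_infinite"
  unfolding quot_purely_infinite_def
proof (intro ballI impI)
  fix a assume a: "a \<in> l1A" and "a \<notin> J"
  then obtain B C where "dominant_sandwich a B C"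
    using not_dominant_sandwich_imp_in_J by blast
  then obtain b c where "b \<in> l1A" "c \<in> l1A" "(b #\<^sub>\<ell> a) #\<^sub>\<ell> c = l1unit"
    using dominant_sandwich_imp_unit[OF a] by blast
  moreover have "qdiff l1unit l1unit \<in> J" by (simp add: qdiff_def J_zero)
  ultimately show "\<exists>b\<in>l1A. \<exists>c\<in>l1A. qdiff ((b #\<^sub>\<ell> a) #\<^sub>\<ell> c) l1unit \<in> J" by metis
qed

theorem theorem3p17:
  shows "\<not> quot_finite_dim \<and> \<not> quot_division_algebra \<and> quot_purely_infinite"
  using not_quot_finite_dim not_quot_division_algebra quot_purely_infinite by blast
end
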